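(* Let $(\Gamma,\mathfrak o,\mathfrak m,\mathfrak q)$ be a quantized Brauer graph and $A_\Gamma$ the associated Brauer graph algebra, and let $d\ge3$. Then $A_\Gamma$ is $d$-homogeneous if and only if $\Gamma$ is a star with $n$ edges for some $n\ge1$ such that $n$ divides $d-1$, the multiplicity of the central vertex is $\frac{d-1}{n}$ and all other multiplicities are $1$. In this case $A_\Gamma$ is isomorphic to the symmetric Nakayama algebra $KQ/I$, where $Q$ is an oriented cycle of length $n$ and $I$ is the ideal generated by all paths of length $d$.
   Context: Let $K$ be a field. A Brauer graph $(\Gamma,\mathfrak o,\mathfrak m)$ consists of a finite connected graph $\Gamma$ with at least one edge (loops and multiple edges allowed), a multiplicity function $\mathfrak m:\Gamma_0\to\mathbb Z_{>0}$ on the vertex set $\Gamma_0$, and, for each vertex $\alpha$, a cyclic ordering $\mathfrak o$ of the edges incident with $\alpha$ (a loop at $\alpha$ occurs twice in this cyclic ordering, the two occurrences being treated as distinct). The valency $\mathrm{val}(\alpha)$ is the number of edges incident with $\alpha$, loops counted twice. An edge $t$ is the successor of $s$ at $\alpha$ if $t$ directly follows $s$ in the cyclic ordering at $\alpha$ (if $\mathrm{val}(\alpha)=1$ the unique edge is its own successor). An edge $s$ is truncated at $\alpha$ if $\mathrm{val}(\alpha)=1$, $\mathfrak m(\alpha)=1$ and $s$ is the edge at $\alpha$; $s$ is a truncated edge if it is truncated at one of its endpoints. The successor sequence of $s$ at $\alpha$ is $s=s_0,s_1,\dots,s_{\mathrm{val}(\alpha)-1}$ with $s_{i+1}$ the successor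 of $s_i$ at $\alpha$. A quantizing function $\mathfrak q$ assigns $\mathfrak q_{s,\alpha}\in K\setminus\{0\}$ to each pair $(s,\alpha)$ with $s$ incident with $\alpha$ and $s$ not truncated at either endpoint; $(\Gamma,\mathfrak o,\mathfrak m,\mathfrak q)$ is a quantized Brauer graph. The Brauer graph algebra $A_\Gamma=KQ_\Gamma/I_\Gamma$ (paths written left to right) is: if $\Gamma=\mathbb A_2$ with both multiplicities $1$, $A_\Gamma=K[x]/(x^2)$. Otherwise $Q_\Gamma$ has a vertex $v_s$ for each edge $s$, and for each vertex $\alpha$ and each occurrence of $t$ as the successor of $s$ at $\alpha$ with $s$ not truncated at $\alpha$, an arrow $v_s\to v_t$. For $s$ at $\alpha$ not truncated at $\alpha$, with successor sequence $s_0,\dots,s_{v-1}$, $v=\mathrm{val}(\alpha)$, $s_v=s_0$, let $C_{s,\alpha}=a_0a_1\cdots a_{v-1}$, where $a_r$ is the arrow for $s_{r+1}$ succeeding $s_r$ at $\alpha$. $I_\Gamma$ is generated by: type one: for each edge $s$ with endpoints $\alpha,\beta$ not truncated at either, $\mathfrak q_{s,\alpha}C_{s,\alpha}^{\mathfrak m(\alpha)}-\mathfrak q_{s,\beta}C_{s,\beta}^{\mathfrak m(\beta)}$; type two: for each edge $s$ truncated at $\alpha$ with other endpoint $\beta$, writing $C_{s,\beta}=b_0b_1\cdots b_{\mathrm{val}(\beta)-1}$, the path $C_{s,\beta}^{\mathfrak m(\beta)}b_0$; type three: each path $ab$ of length $2$ in $Q_\Gamma$ that is not a subpath of any $C_{t,\gamma}$.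 A star with $n$ edges is a tree with one central vertex joined by $n$ edges to $n$ further vertices of valency $1$ (for $n=1$ it is $\mathbb A_2$, and the "central vertex" is either endpoint). For $d\ge2$, $KQ/I$ is $d$-homogeneous if $I$ has a minimal generating set consisting of homogeneous elements of length exactly $d$ (path-length grading). *)

theory Defs
  imports Main
begin

section \<open>Quivers, paths, path algebras (paths written left to right)\<close>

record ('a, 'b) quiver =
  qverts :: "'a set"
  qarrs  :: "'b set"
  qsrc   :: "'b \<Rightarrow> 'a"
  qtgt   :: "'b \<Rightarrow> 'a"

datatype ('a, 'b) qpath = Triv 'a | Arrs "'b list"

fun valid_path :: "('a, 'b) quiver \<Rightarrow> ('a, 'b) qpath \<Rightarrow> bool" where
  "valid_path Q (Triv v) = (v \<in> qverts Q)"
| "valid_path Q (Arrs xs) = (xs \<noteq> [] \<and> set xs \<subseteq> qarrs Q \<and>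
      (\<forall>i. Suc i < length xs \<longrightarrow> qtgt Q (xs ! i) = qsrc Q (xs ! Suc i)))"

fun plen :: "('a, 'b) qpath \<Rightarrow> nat" where
  "plen (Triv v) = 0"
| "plen (Arrs xs) = length xs"

fun pstart :: "('a, 'b) quiver \<Rightarrow> ('a, 'b) qpath \<Rightarrow> 'a" where
  "pstart Q (Triv v) = v"
| "pstart Q (Arrs xs) = qsrc Q (hd xs)"

fun pend :: "('a, 'b) quiver \<Rightarrow> ('a, 'b) qpath \<Rightarrow> 'a" where
  "pend Q (Triv v) = v"
| "pend Q (Arrs xs) = qtgt Q (last xs)"

text \<open>Concatenation of paths; None encodes the zero product.\<close>
definition pcat :: "('a, 'b) quiver \<Rightarrow> ('a, 'b) qpath \<Rightarrow> ('a, 'b) qpath \<Rightarrow> ('a, 'b) qpath option" where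
  "pcat Q p1 p2 =
     (if pend Q p1 \<noteq> pstart Q p2 then None
      else Some (case (p1, p2) of
                   (Triv _, _) \<Rightarrow> p2
                 | (_, Triv _) \<Rightarrow> p1
                 | (Arrs xs, Arrs ys) \<Rightarrow> Arrs (xs @ ys)))"

definition path_algebra :: "('a, 'b) quiver \<Rightarrow> (('a, 'b) qpath \<Rightarrow> 'k::field) set" where
  "path_algebra Q = {f. finite {p. f p \<noteq> 0} \<and> (\<forall>p. f p \<noteq> 0 \<longrightarrow> valid_path Q p)}"

definition pzero :: "('a, 'b) qpath \<Rightarrow> 'k::field" where
  "pzero = (\<lambda>p. 0)"

definition padd :: "(('a, 'b) qpath \<Rightarrow> 'k::field) \<Rightarrow> (('a, 'b) qpath \<Rightarrow> 'k) \<Rightarrow> ('a, 'b) qpath \<Rightarrow> 'k" where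
  "padd f g = (\<lambda>p. f p + g p)"

definition psub :: "(('a, 'b) qpath \<Rightarrow> 'k::field) \<Rightarrow> (('a, 'b) qpath \<Rightarrow> 'k) \<Rightarrow> ('a, 'b) qpath \<Rightarrow> 'k" where
  "psub f g = (\<lambda>p. f p - g p)"

definition psmult :: "'k::field \<Rightarrow> (('a, 'b) qpath \<Rightarrow> 'k) \<Rightarrow> ('a, 'b) qpath \<Rightarrow> 'k" where
  "psmult c f = (\<lambda>p. c * f p)"

definition pmult :: "('a, 'b) quiver \<Rightarrow> (('a, 'b) qpath \<Rightarrow> 'k::field) \<Rightarrow> (('a, 'b) qpath \<Rightarrow> 'k) \<Rightarrow> ('a, 'b) qpath \<Rightarrow> 'k" where
  "pmult Q f g = (\<lambda>p. \<Sum>(p1, p2) \<in> {(p1, p2). f p1 \<noteq> 0 \<and> g p2 \<noteq> 0 \<and> pcat Q p1 p2 = Some p}.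
                          f p1 * g p2)"

definition pone :: "('a, 'b) quiver \<Rightarrow> ('a, 'b) qpath \<Rightarrow> 'k::field" where
  "pone Q = (\<lambda>p. case p of Triv v \<Rightarrow> (if v \<in> qverts Q then 1 else 0) | Arrs _ \<Rightarrow> 0)"

definition pbasis :: "('a, 'b) qpath \<Rightarrow> ('a, 'b) qpath \<Rightarrow> 'k::field" where
  "pbasis p = (\<lambda>q. if q = p then 1 else 0)"

inductive_set gen_ideal :: "('a, 'b) quiver \<Rightarrow> (('a, 'b) qpath \<Rightarrow> 'k::field) set \<Rightarrow> (('a, 'b) qpath \<Rightarrow> 'k) set"
  for Q R where
  gen: "r \<in> R \<Longrightarrow> r \<in> gen_ideal Q R"
| zero: "pzero \<in> gen_ideal Q R"
| add: "x \<in> gen_ideal Q R \<Longrightarrow> y \<in> gen_ideal Q R \<Longrightarrow> padd x y \<in> gen_ideal Q R"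
| lmult: "x \<in> gen_ideal Q R \<Longrightarrow> a \<in> path_algebra Q \<Longrightarrow> pmult Q a x \<in> gen_ideal Q R"
| rmult: "x \<in> gen_ideal Q R \<Longrightarrow> a \<in> path_algebra Q \<Longrightarrow> pmult Q x a \<in> gen_ideal Q R"

definition homogeneous :: "('a, 'b) quiver \<Rightarrow> nat \<Rightarrow> (('a, 'b) qpath \<Rightarrow> 'k::field) \<Rightarrow> bool" where
  "homogeneous Q d f \<longleftrightarrow> f \<in> path_algebra Q \<and> (\<forall>p. f p \<noteq> 0 \<longrightarrow> plen p = d)"

definition d_homogeneous :: "('a, 'b) quiver \<Rightarrow> (('a, 'b) qpath \<Rightarrow> 'k::field) set \<Rightarrow> nat \<Rightarrow> bool" where
  "d_homogeneous Q I d \<longleftrightarrow>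
     (\<exists>S. S \<subseteq> {f. homogeneous Q d f} \<and> gen_ideal Q S = I \<and>
          (\<forall>S'. S' \<subset> S \<longrightarrow> gen_ideal Q S' \<noteq> I))"

text \<open>K-algebra isomorphism KQ1/I1 = KQ2/I2, expressed via a map on representatives.\<close>
definition quot_alg_iso ::
  "('a, 'b) quiver \<Rightarrow> (('a, 'b) qpath \<Rightarrow> 'k::field) set \<Rightarrow>
   ('c, 'd) quiver \<Rightarrow> (('c, 'd) qpath \<Rightarrow> 'k) set \<Rightarrow> bool" where
  "quot_alg_iso Q1 I1 Q2 I2 \<longleftrightarrow>
     (\<exists>\<phi>. (\<forall>x \<in> path_algebra Q1. \<phi> x \<in> path_algebra Q2) \<and>
          (\<forall>x \<in> path_algebra Q1. \<forall>y \<in> path_algebra Q1.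
              psub (\<phi> (padd x y)) (padd (\<phi> x) (\<phi> y)) \<in> I2) \<and>
          (\<forall>c. \<forall>x \<in> path_algebra Q1. psub (\<phi> (psmult c x)) (psmult c (\<phi> x)) \<in> I2) \<and>
          (\<forall>x \<in> path_algebra Q1. \<forall>y \<in> path_algebra Q1.
              psub (\<phi> (pmult Q1 x y)) (pmult Q2 (\<phi> x) (\<phi> y)) \<in> I2) \<and>
          psub (\<phi> (pone Q1)) (pone Q2) \<in> I2 \<and>
          (\<forall>x \<in> path_algebra Q1. \<phi> x \<in> I2 \<longleftrightarrow> x \<in> I1) \<and>
          (\<forall>y \<in> path_algebra Q2. \<exists>x \<in> path_algebra Q1. psub (\<phi> x) y \<in> I2))"

text \<open>A Brauer graph is given by a vertex set V, an edge set E, for each vertex \<alpha> a list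
  ord \<alpha> representing the cyclic ordering of the edges incident with \<alpha> (a loop occurs twice),
  and a multiplicity m.  Each edge occurs exactly twice in total (once at each endpoint,
  twice at the same vertex for a loop).  Valency of \<alpha> = length (ord \<alpha>).\<close>

definition bg_adj :: "'v set \<Rightarrow> ('v \<Rightarrow> 'e list) \<Rightarrow> ('v \<times> 'v) set" where
  "bg_adj V ord = {(\<alpha>, \<beta>). \<alpha> \<in> V \<and> \<beta> \<in> V \<and> (\<exists>s. s \<in> set (ord \<alpha>) \<and> s \<in> set (ord \<beta>))}"

definition brauer_graph :: "'v set \<Rightarrow> 'e set \<Rightarrow> ('v \<Rightarrow> 'e list) \<Rightarrow> ('v \<Rightarrow> nat) \<Rightarrow> bool" where
  "brauer_graph V E ord m \<longleftrightarrow>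
     finite V \<and> finite E \<and> E \<noteq> {} \<and>
     (\<forall>\<alpha> \<in> V. set (ord \<alpha>) \<subseteq> E) \<and>
     (\<forall>s \<in> E. (\<Sum>\<alpha> \<in> V. count_list (ord \<alpha>) s) = 2) \<and>
     (\<forall>\<alpha> \<in> V. \<forall>\<beta> \<in> V. (\<alpha>, \<beta>) \<in> (bg_adj V ord)\<^sup>*) \<and>
     (\<forall>\<alpha> \<in> V. m \<alpha> > 0)"

definition truncated_at :: "('v \<Rightarrow> 'e list) \<Rightarrow> ('v \<Rightarrow> nat) \<Rightarrow> 'e \<Rightarrow> 'v \<Rightarrow> bool" where
  "truncated_at ord m s \<alpha> \<longleftrightarrow> length (ord \<alpha>) = 1 \<and> m \<alpha> = 1 \<and> ord \<alpha> = [s]"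

definition truncated_edge :: "'v set \<Rightarrow> ('v \<Rightarrow> 'e list) \<Rightarrow> ('v \<Rightarrow> nat) \<Rightarrow> 'e \<Rightarrow> bool" where
  "truncated_edge V ord m s \<longleftrightarrow> (\<exists>\<alpha> \<in> V. s \<in> set (ord \<alpha>) \<and> truncated_at ord m s \<alpha>)"

definition quantized_brauer_graph ::
  "'v set \<Rightarrow> 'e set \<Rightarrow> ('v \<Rightarrow> 'e list) \<Rightarrow> ('v \<Rightarrow> nat) \<Rightarrow> ('e \<Rightarrow> 'v \<Rightarrow> 'k::field) \<Rightarrow> bool" where
  "quantized_brauer_graph V E ord m q \<longleftrightarrow>
     brauer_graph V E ord m \<and>
     (\<forall>\<alpha> \<in> V. \<forall>s \<in> set (ord \<alpha>). \<not> truncated_edge V ord m s \<longrightarrow> q s \<alpha> \<noteq> 0)"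

text \<open>Half-edges (occurrences of edges in the cyclic orderings): (\<alpha>, i) with i < val \<alpha>.\<close>
definition halfedges :: "'v set \<Rightarrow> ('v \<Rightarrow> 'e list) \<Rightarrow> ('v \<times> nat) set" where
  "halfedges V ord = {(\<alpha>, i). \<alpha> \<in> V \<and> i < length (ord \<alpha>)}"

definition hedge :: "('v \<Rightarrow> 'e list) \<Rightarrow> 'v \<times> nat \<Rightarrow> 'e" where
  "hedge ord h = ord (fst h) ! snd h"

definition hsucc :: "('v \<Rightarrow> 'e list) \<Rightarrow> 'v \<times> nat \<Rightarrow> 'v \<times> nat" where
  "hsucc ord h = (fst h, Suc (snd h) mod length (ord (fst h)))"

text \<open>C_{s,\<alpha>} for the occurrence h of s at \<alpha>: the arrows a_0 ... a_{val-1}, where the arrow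
  a_r is the occurrence s_r (whose successor is s_{r+1}).\<close>
definition bcycle :: "('v \<Rightarrow> 'e list) \<Rightarrow> 'v \<times> nat \<Rightarrow> ('v \<times> nat) list" where
  "bcycle ord h = map (\<lambda>k. (fst h, (snd h + k) mod length (ord (fst h)))) [0..<length (ord (fst h))]"

definition bcycle_pow :: "('v \<Rightarrow> 'e list) \<Rightarrow> ('v \<Rightarrow> nat) \<Rightarrow> 'v \<times> nat \<Rightarrow> ('v \<times> nat) list" where
  "bcycle_pow ord m h = concat (replicate (m (fst h)) (bcycle ord h))"

definition is_A2_11 :: "'v set \<Rightarrow> 'e set \<Rightarrow> ('v \<Rightarrow> 'e list) \<Rightarrow> ('v \<Rightarrow> nat) \<Rightarrow> bool" where
  "is_A2_11 V E ord m \<longleftrightarrow>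
     (\<exists>\<alpha> \<beta> s. \<alpha> \<noteq> \<beta> \<and> V = {\<alpha>, \<beta>} \<and> E = {s} \<and> ord \<alpha> = [s] \<and> ord \<beta> = [s] \<and>
               m \<alpha> = 1 \<and> m \<beta> = 1)"

text \<open>Vertices are the edges of Gamma; arrows are the occurrences
  (half-edges) h of edges s at vertices \<alpha> with s not truncated at \<alpha>, going from s to its
  successor.  In the special case A_2 with multiplicities 1, the quiver of K[x]/(x^2):
  one vertex and one loop.\<close>
definition bg_quiver :: "'v set \<Rightarrow> 'e set \<Rightarrow> ('v \<Rightarrow> 'e list) \<Rightarrow> ('v \<Rightarrow> nat) \<Rightarrow> ('e, 'v \<times> nat) quiver" where
  "bg_quiver V E ord m =
     (if is_A2_11 V E ord m then
        \<lparr>qverts = E, qarrs = {(SOME \<alpha>. \<alpha> \<in> V, 0)}, qsrc = hedge ord, qtgt = hedge ord\<rparr>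
      else
        \<lparr>qverts = E,
         qarrs = {h \<in> halfedges V ord. \<not> truncated_at ord m (hedge ord h) (fst h)},
         qsrc = hedge ord,
         qtgt = (\<lambda>h. hedge ord (hsucc ord h))\<rparr>)"

definition bg_rel_one ::
  "'v set \<Rightarrow> 'e set \<Rightarrow> ('v \<Rightarrow> 'e list) \<Rightarrow> ('v \<Rightarrow> nat) \<Rightarrow> ('e \<Rightarrow> 'v \<Rightarrow> 'k::field) \<Rightarrow>
   (('e, 'v \<times> nat) qpath \<Rightarrow> 'k) set" where
  "bg_rel_one V E ord m q =
     {psub (psmult (q s (fst h1)) (pbasis (Arrs (bcycle_pow ord m h1))))
           (psmult (q s (fst h2)) (pbasis (Arrs (bcycle_pow ord m h2)))) | s h1 h2.
        s \<in> E \<and> \<not> truncated_edge V ord m s \<and>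
        h1 \<in> halfedges V ord \<and> h2 \<in> halfedges V ord \<and> h1 \<noteq> h2 \<and>
        hedge ord h1 = s \<and> hedge ord h2 = s}"

definition bg_rel_two ::
  "'v set \<Rightarrow> 'e set \<Rightarrow> ('v \<Rightarrow> 'e list) \<Rightarrow> ('v \<Rightarrow> nat) \<Rightarrow> (('e, 'v \<times> nat) qpath \<Rightarrow> 'k::field) set" where
  "bg_rel_two V E ord m =
     {pbasis (Arrs (bcycle_pow ord m h2 @ [h2])) | s h1 h2.
        s \<in> E \<and> h1 \<in> halfedges V ord \<and> h2 \<in> halfedges V ord \<and> h1 \<noteq> h2 \<and>
        hedge ord h1 = s \<and> hedge ord h2 = s \<and> truncated_at ord m s (fst h1)}"

definition bg_rel_three ::
  "'v set \<Rightarrow> 'e set \<Rightarrow> ('v \<Rightarrow> 'e list) \<Rightarrow> ('v \<Rightarrow> nat) \<Rightarrow> (('e, 'v \<times> nat) qpath \<Rightarrow> 'k::field) set" where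
  "bg_rel_three V E ord m =
     (let Q = bg_quiver V E ord m in
      {pbasis (Arrs [a, b]) | a b.
        a \<in> qarrs Q \<and> b \<in> qarrs Q \<and> qtgt Q a = qsrc Q b \<and>
        \<not> (\<exists>h \<in> qarrs Q. \<exists>u w. bcycle ord h = u @ [a, b] @ w) \<and>
        \<not> (a = b \<and> length (ord (fst a)) = 1)})"

definition bg_relations ::
  "'v set \<Rightarrow> 'e set \<Rightarrow> ('v \<Rightarrow> 'e list) \<Rightarrow> ('v \<Rightarrow> nat) \<Rightarrow> ('e \<Rightarrow> 'v \<Rightarrow> 'k::field) \<Rightarrow>
   (('e, 'v \<times> nat) qpath \<Rightarrow> 'k) set" where
  "bg_relations V E ord m q =
     (if is_A2_11 V E ord m then {pbasis (Arrs [(SOME \<alpha>. \<alpha> \<in> V, 0), (SOME \<alpha>. \<alpha> \<in> V, 0)])}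
      else bg_rel_one V E ord m q \<union> bg_rel_two V E ord m \<union> bg_rel_three V E ord m)"

definition bg_ideal ::
  "'v set \<Rightarrow> 'e set \<Rightarrow> ('v \<Rightarrow> 'e list) \<Rightarrow> ('v \<Rightarrow> nat) \<Rightarrow> ('e \<Rightarrow> 'v \<Rightarrow> 'k::field) \<Rightarrow>
   (('e, 'v \<times> nat) qpath \<Rightarrow> 'k) set" where
  "bg_ideal V E ord m q = gen_ideal (bg_quiver V E ord m) (bg_relations V E ord m q)"

text \<open>Gamma is a star with n edges and central vertex c: c is joined by each of the n edges
  (each occurring once at c) to n further vertices, each of valency 1.\<close>
definition is_star :: "'v set \<Rightarrow> 'e set \<Rightarrow> ('v \<Rightarrow> 'e list) \<Rightarrow> 'v \<Rightarrow> nat \<Rightarrow> bool" where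
  "is_star V E ord c n \<longleftrightarrow>
     c \<in> V \<and> card E = n \<and> card V = n + 1 \<and>
     (\<forall>s \<in> E. count_list (ord c) s = 1) \<and>
     (\<forall>\<alpha> \<in> V - {c}. length (ord \<alpha>) = 1)"

definition cycle_quiver :: "nat \<Rightarrow> (nat, nat) quiver" where
  "cycle_quiver n = \<lparr>qverts = {..<n}, qarrs = {..<n}, qsrc = id, qtgt = (\<lambda>i. Suc i mod n)\<rparr>"

definition paths_length_ideal :: "nat \<Rightarrow> nat \<Rightarrow> ((nat, nat) qpath \<Rightarrow> 'k::field) set" where
  "paths_length_ideal n d =
     gen_ideal (cycle_quiver n) {pbasis p | p. valid_path (cycle_quiver n) p \<and> plen p = d}"

end

theory Submission
  imports Defs
begin

text \<open>
  If the ideal is generated in degree \<open>d \<ge> 3\<close>, it contains no relation of length 2. Hence the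
  graph is not \<open>A\<^sub>2\<close> with multiplicities 1 and there are no relations of type three. Then every
  edge is truncated: otherwise the arrow preceding one occurrence of the edge, followed by the arrow
  of the other occurrence, would be a type three relation. A connected Brauer graph all of whose
  edges are truncated is a star whose leaves have multiplicity 1.

  Conversely, for a star with \<open>n\<close> edges and central multiplicity \<open>\<mu>\<close> (with \<open>\<mu> n \<ge> 2\<close>), all arrows
  sit at the centre, so the quiver is the oriented \<open>n\<close>-cycle, there are no relations of types one
  and three, and the type two relations are exactly the paths of length \<open>\<mu> n + 1\<close>. A set of
  distinct paths of one length is a minimal generating set, and an ideal is homogeneous in at most
  one degree; relabelling the arrows gives the isomorphism with the Nakayama algebra.
\<close>

section \<open>Path algebras\<close>

lemma plen_pcat: "pcat Q p1 p2 = Some p \<Longrightarrow> plen p = plen p1 + plen p2"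
  by (auto simp: pcat_def split: qpath.splits if_splits)

lemma pcat_plen0_left: "pcat Q p1 p2 = Some p \<Longrightarrow> plen p1 = 0 \<Longrightarrow> plen p2 > 0 \<Longrightarrow> p = p2"
  by (cases p1; cases p2) (auto simp: pcat_def split: if_splits)

lemma pcat_plen0_right: "pcat Q p1 p2 = Some p \<Longrightarrow> plen p2 = 0 \<Longrightarrow> plen p1 > 0 \<Longrightarrow> p = p1"
  by (cases p1; cases p2) (auto simp: pcat_def split: if_splits)

lemma valid_path_Arrs_append:
  assumes "valid_path Q (Arrs xs)" "valid_path Q (Arrs ys)" "qtgt Q (last xs) = qsrc Q (hd ys)"
  shows "valid_path Q (Arrs (xs @ ys))"
proof -
  have "qtgt Q ((xs @ ys) ! i) = qsrc Q ((xs @ ys) ! Suc i)" if i: "Suc i < length (xs @ ys)" for i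
  proof -
    consider "Suc i < length xs" | "Suc i = length xs" | "Suc i > length xs" by linarith
    then show ?thesis
    proof cases
      case 1 then show ?thesis using assms(1) by (simp add: nth_append)
    next
      case 2
      then have "i = length xs - 1" by simp
      then show ?thesis using 2 assms by (auto simp: nth_append last_conv_nth hd_conv_nth)
    next
      case 3
      then have "Suc i - length xs = Suc (i - length xs)" "Suc (i - length xs) < length ys"
        using i by auto
      then show ?thesis using 3 assms(2) by (simp add: nth_append)
    qed
  qed
  then show ?thesis using assms by auto
qed

lemma valid_path_pcat:
  assumes "valid_path Q p1" "valid_path Q p2" "pcat Q p1 p2 = Some p"
  shows "valid_path Q p"
  using assms
  by (cases p1; cases p2)
    (auto simp: pcat_def simp del: valid_path.simps(2) split: if_splits intro: valid_path_Arrs_append)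

lemma pmult_nonzeroD:
  "pmult Q f g p \<noteq> 0 \<Longrightarrow> \<exists>p1 p2. f p1 \<noteq> 0 \<and> g p2 \<noteq> 0 \<and> pcat Q p1 p2 = Some p"
proof (rule ccontr)
  assume "pmult Q f g p \<noteq> 0" "\<nexists>p1 p2. f p1 \<noteq> 0 \<and> g p2 \<noteq> 0 \<and> pcat Q p1 p2 = Some p"
  then have "{(p1, p2). f p1 \<noteq> 0 \<and> g p2 \<noteq> 0 \<and> pcat Q p1 p2 = Some p} = {}" by auto
  then show False using \<open>pmult Q f g p \<noteq> 0\<close> by (simp only: pmult_def sum.empty) simp
qed

lemma pzero_in_path_algebra: "pzero \<in> path_algebra Q"
  by (simp add: path_algebra_def pzero_def)

lemma padd_in_path_algebra:
  assumes "f \<in> path_algebra Q" "g \<in> path_algebra Q"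
  shows "padd f g \<in> path_algebra Q"
proof -
  have "{p. padd f g p \<noteq> 0} \<subseteq> {p. f p \<noteq> 0} \<union> {p. g p \<noteq> 0}" by (auto simp: padd_def)
  then show ?thesis using assms by (auto simp: path_algebra_def padd_def intro: finite_subset)
qed

lemma pmult_in_path_algebra:
  assumes "f \<in> path_algebra Q" "g \<in> path_algebra Q"
  shows "pmult Q f g \<in> path_algebra Q"
proof -
  have "{p. pmult Q f g p \<noteq> 0} \<subseteq> (\<lambda>(p1, p2). the (pcat Q p1 p2)) ` ({p. f p \<noteq> 0} \<times> {p. g p \<noteq> 0})"
    by (force dest: pmult_nonzeroD)
  moreover have "finite ({p. f p \<noteq> 0} \<times> {p. g p \<noteq> 0})"
    using assms by (simp add: path_algebra_def)
  ultimately have "finite {p. pmult Q f g p \<noteq> 0}" by (meson finite_imageI finite_subset)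
  moreover have "valid_path Q p" if "pmult Q f g p \<noteq> 0" for p
    using pmult_nonzeroD[OF that] assms valid_path_pcat unfolding path_algebra_def by blast
  ultimately show ?thesis by (simp add: path_algebra_def)
qed

lemma gen_ideal_subset_path_algebra:
  "R \<subseteq> path_algebra Q \<Longrightarrow> gen_ideal Q R \<subseteq> path_algebra Q"
proof
  show "x \<in> path_algebra Q" if "R \<subseteq> path_algebra Q" "x \<in> gen_ideal Q R" for x
    using that(2,1)
    by induction (auto intro: pmult_in_path_algebra padd_in_path_algebra pzero_in_path_algebra)
qed

lemma pbasis_in_path_algebra: "valid_path Q p \<Longrightarrow> pbasis p \<in> path_algebra Q"
  by (simp add: path_algebra_def pbasis_def)

lemma pbasis_self: "pbasis p p = (1 :: 'k::field)"
  by (simp add: pbasis_def)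

lemma pbasis_nonzero_iff: "(pbasis p q :: 'k::field) \<noteq> 0 \<longleftrightarrow> q = p"
  by (simp add: pbasis_def)

lemma pone_eq: "pone Q p = (if valid_path Q p \<and> plen p = 0 then 1 else 0)"
  by (cases p) (auto simp: pone_def)

lemma gen_ideal_support:
  assumes "x \<in> gen_ideal Q R" "x p \<noteq> 0"
    and gen: "\<And>r p. r \<in> R \<Longrightarrow> r p \<noteq> 0 \<Longrightarrow> P p"
    and ext: "\<And>p1 p2 p. pcat Q p1 p2 = Some p \<Longrightarrow> P p1 \<or> P p2 \<Longrightarrow> P p"
  shows "P p"
  using assms(1,2)
proof (induction arbitrary: p rule: gen_ideal.induct)
  case (gen r) then show ?case using assms(3) by blast
next
  case zero then show ?case by (simp add: pzero_def)
next
  case (add x y) then show ?case by (cases "x p = 0") (auto simp: padd_def)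
next
  case (lmult x a) then show ?case using ext by (blast dest: pmult_nonzeroD)
next
  case (rmult x a) then show ?case using ext by (blast dest: pmult_nonzeroD)
qed

lemma gen_ideal_support_plen_ge:
  assumes "x \<in> gen_ideal Q R" "x p \<noteq> 0" and "\<And>r p. r \<in> R \<Longrightarrow> r p \<noteq> 0 \<Longrightarrow> L \<le> plen p"
  shows "L \<le> plen p"
  using gen_ideal_support[where P = "\<lambda>p. L \<le> plen p"] assms plen_pcat by fastforce

lemma pbasis_notin_gen_ideal:
  assumes "plen p0 > 0" and "\<And>r. r \<in> R \<Longrightarrow> \<exists>p. r = pbasis p \<and> plen p = plen p0 \<and> p \<noteq> p0"
  shows "(pbasis p0 :: _ \<Rightarrow> 'k::field) \<notin> gen_ideal Q R"
proof
  assume mem: "pbasis p0 \<in> gen_ideal Q R"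
  have gen: "plen p0 \<le> plen p \<and> p \<noteq> p0" if "r \<in> R" "r p \<noteq> 0" for r p
    using assms(2)[OF that(1)] that(2) by (auto simp: pbasis_nonzero_iff)
  have ext: "plen p0 \<le> plen p \<and> p \<noteq> p0"
    if "pcat Q p1 p2 = Some p" "plen p0 \<le> plen p1 \<and> p1 \<noteq> p0 \<or> plen p0 \<le> plen p2 \<and> p2 \<noteq> p0"
    for p1 p2 p
  proof -
    have len: "plen p = plen p1 + plen p2" using plen_pcat[OF that(1)] .
    consider "plen p1 = 0" | "plen p2 = 0" | "plen p1 > 0" "plen p2 > 0" by blast
    then show ?thesis
    proof cases
      case 1 then show ?thesis using that assms(1) len pcat_plen0_left[OF that(1)] by auto
    next
      case 2 then show ?thesis using that assms(1) len pcat_plen0_right[OF that(1)] by auto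
    next
      case 3 then show ?thesis using that(2) len by auto
    qed
  qed
  have "plen p0 \<le> plen p0 \<and> p0 \<noteq> p0"
    by (rule gen_ideal_support[where P = "\<lambda>p. plen p0 \<le> plen p \<and> p \<noteq> p0", OF mem])
      (simp add: pbasis_self, fact gen, fact ext)
  then show False by simp
qed

lemma d_homogeneousE:
  assumes "d_homogeneous Q I d"
  obtains S where "S \<subseteq> {f. homogeneous Q d f}" "gen_ideal Q S = I"
  using assms unfolding d_homogeneous_def by (elim exE conjE) (rule that)

lemma d_homogeneous_support_plen_ge:
  assumes "d_homogeneous Q I d" "x \<in> I" "x p \<noteq> 0"
  shows "d \<le> plen p"
proof -
  obtain S where S: "S \<subseteq> {f. homogeneous Q d f}" "gen_ideal Q S = I"
    using assms(1) by (rule d_homogeneousE)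
  have "d \<le> plen p'" if "r \<in> S" "r p' \<noteq> 0" for r p'
    using subsetD[OF S(1) that(1)] that(2) unfolding homogeneous_def by simp
  with assms(2,3) S(2) show ?thesis by (blast intro: gen_ideal_support_plen_ge)
qed

lemma d_homogeneous_le:
  assumes "d_homogeneous Q I d" "d_homogeneous Q I d'" "x \<in> I" "x p \<noteq> 0"
  shows "d \<le> d'"
proof -
  obtain S where S: "S \<subseteq> {f. homogeneous Q d' f}" "gen_ideal Q S = I"
    using assms(2) by (rule d_homogeneousE)
  obtain r p' where r: "r \<in> S" "r p' \<noteq> 0"
    using gen_ideal_support[where P = "\<lambda>_. False"] assms(3,4) S(2) by blast
  then have "r \<in> I" using S(2) gen_ideal.gen by blast
  then have "d \<le> plen p'" using d_homogeneous_support_plen_ge[OF assms(1)] r(2) by blast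
  also have "plen p' = d'" using subsetD[OF S(1) r(1)] r(2) unfolding homogeneous_def by simp
  finally show ?thesis .
qed

lemma d_homogeneous_unique:
  "d_homogeneous Q I d \<Longrightarrow> d_homogeneous Q I d' \<Longrightarrow> x \<in> I \<Longrightarrow> x p \<noteq> 0 \<Longrightarrow> d = d'"
  by (meson antisym d_homogeneous_le)

lemma d_homogeneous_gen_ideal_pbasis:
  assumes "d > 0" and P: "\<And>p. p \<in> P \<Longrightarrow> valid_path Q p \<and> plen p = d"
  shows "d_homogeneous Q (gen_ideal Q (pbasis ` P :: (_ \<Rightarrow> 'k::field) set)) d"
  unfolding d_homogeneous_def
proof (intro exI conjI allI impI)
  show "pbasis ` P \<subseteq> {f. homogeneous Q d (f :: _ \<Rightarrow> 'k)}"
    using P by (auto simp: homogeneous_def pbasis_in_path_algebra pbasis_nonzero_iff)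
  fix S' assume "S' \<subset> (pbasis ` P :: (_ \<Rightarrow> 'k) set)"
  then obtain p0 where p0: "p0 \<in> P" "pbasis p0 \<notin> S'" "S' \<subseteq> pbasis ` P" by blast
  have "\<exists>p. r = pbasis p \<and> plen p = plen p0 \<and> p \<noteq> p0" if "r \<in> S'" for r
    using that p0 P by blast
  then have "(pbasis p0 :: _ \<Rightarrow> 'k) \<notin> gen_ideal Q S'"
    using assms(1) P[OF p0(1)] by (intro pbasis_notin_gen_ideal) auto
  moreover have "(pbasis p0 :: _ \<Rightarrow> 'k) \<in> gen_ideal Q (pbasis ` P)"
    using p0 by (blast intro: gen_ideal.gen)
  ultimately show "gen_ideal Q S' \<noteq> gen_ideal Q (pbasis ` P)" by blast
qed simp

section \<open>Isomorphisms of quivers\<close>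

text \<open>\<open>U\<close> maps paths of \<open>Q2\<close> to paths of \<open>Q1\<close>, so pulling back along \<open>U\<close> maps \<open>KQ1\<close> to \<open>KQ2\<close>.\<close>
definition path_iso ::
  "('a, 'b) quiver \<Rightarrow> ('c, 'd) quiver \<Rightarrow> (('c, 'd) qpath \<Rightarrow> ('a, 'b) qpath) \<Rightarrow> bool" where
  "path_iso Q1 Q2 U \<longleftrightarrow>
     bij_betw U {p. valid_path Q2 p} {p. valid_path Q1 p} \<and>
     (\<forall>p1 p2. valid_path Q2 p1 \<longrightarrow> valid_path Q2 p2 \<longrightarrow>
        pcat Q1 (U p1) (U p2) = map_option U (pcat Q2 p1 p2)) \<and>
     (\<forall>p. valid_path Q2 p \<longrightarrow> plen (U p) = plen p)"

definition pullback ::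
  "('c, 'd) quiver \<Rightarrow> (('c, 'd) qpath \<Rightarrow> ('a, 'b) qpath) \<Rightarrow> (('a, 'b) qpath \<Rightarrow> 'k::field) \<Rightarrow>
   ('c, 'd) qpath \<Rightarrow> 'k" where
  "pullback Q2 U x = (\<lambda>p. if valid_path Q2 p then x (U p) else 0)"

lemma pullback_pzero: "pullback Q2 U pzero = pzero"
  by (auto simp: pullback_def pzero_def)

lemma pullback_padd: "pullback Q2 U (padd x y) = padd (pullback Q2 U x) (pullback Q2 U y)"
  by (auto simp: pullback_def padd_def)

lemma pullback_psmult: "pullback Q2 U (psmult c x) = psmult c (pullback Q2 U x)"
  by (auto simp: pullback_def psmult_def)

context
  fixes Q1 :: "('a, 'b) quiver" and Q2 :: "('c, 'd) quiver" and U
  assumes iso: "path_iso Q1 Q2 U"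
begin

lemma path_iso_bij: "bij_betw U {p. valid_path Q2 p} {p. valid_path Q1 p}"
  using iso by (simp add: path_iso_def)

lemma path_iso_valid: "valid_path Q2 p \<Longrightarrow> valid_path Q1 (U p)"
  using path_iso_bij by (auto dest: bij_betwE)

lemma path_iso_inj_on: "inj_on U {p. valid_path Q2 p}"
  using path_iso_bij by (simp add: bij_betw_def)

lemma path_iso_inj: "valid_path Q2 p \<Longrightarrow> valid_path Q2 p' \<Longrightarrow> U p = U p' \<longleftrightarrow> p = p'"
  using inj_on_eq_iff[OF path_iso_inj_on] by blast

lemma path_iso_surj: "valid_path Q1 q \<Longrightarrow> \<exists>p. valid_path Q2 p \<and> U p = q"
  using path_iso_bij by (force simp: bij_betw_def)

lemma path_iso_pcat:
  "valid_path Q2 p1 \<Longrightarrow> valid_path Q2 p2 \<Longrightarrow> pcat Q1 (U p1) (U p2) = map_option U (pcat Q2 p1 p2)"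
  using iso by (simp add: path_iso_def)

lemma path_iso_plen: "valid_path Q2 p \<Longrightarrow> plen (U p) = plen p"
  using iso by (simp add: path_iso_def)

lemma path_iso_pcat_iff:
  assumes "valid_path Q2 p1" "valid_path Q2 p2" "valid_path Q2 p"
  shows "pcat Q1 (U p1) (U p2) = Some (U p) \<longleftrightarrow> pcat Q2 p1 p2 = Some p"
  using path_iso_pcat[OF assms(1,2)] valid_path_pcat[OF assms(1,2)] path_iso_inj assms(3)
  by (cases "pcat Q2 p1 p2") auto

lemma path_iso_image_paths_length:
  "U ` {p. valid_path Q2 p \<and> plen p = d} = {q. valid_path Q1 q \<and> plen q = d}"
proof (intro equalityI subsetI)
  fix q assume "q \<in> U ` {p. valid_path Q2 p \<and> plen p = d}"
  then show "q \<in> {q. valid_path Q1 q \<and> plen q = d}" using path_iso_valid path_iso_plen by auto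
next
  fix q assume q: "q \<in> {q. valid_path Q1 q \<and> plen q = d}"
  then obtain p where "valid_path Q2 p" "U p = q" using path_iso_surj by blast
  then show "q \<in> U ` {p. valid_path Q2 p \<and> plen p = d}" using q path_iso_plen by auto
qed

lemma path_iso_inv: "path_iso Q2 Q1 (inv_into {p. valid_path Q2 p} U)"
proof -
  let ?V = "inv_into {p. valid_path Q2 p} U"
  have V: "valid_path Q2 (?V q) \<and> U (?V q) = q" if "valid_path Q1 q" for q
    using that bij_betwE[OF bij_betw_inv_into[OF path_iso_bij]] bij_betw_inv_into_right[OF path_iso_bij]
    by simp
  have VU: "?V (U p) = p" if "valid_path Q2 p" for p
    using that path_iso_bij by (simp add: bij_betw_inv_into_left)
  have "pcat Q2 (?V q1) (?V q2) = map_option ?V (pcat Q1 q1 q2)"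
    if q: "valid_path Q1 q1" "valid_path Q1 q2" for q1 q2
  proof -
    have v: "valid_path Q2 (?V q1)" "valid_path Q2 (?V q2)" using V q by auto
    have u: "U (?V q1) = q1" "U (?V q2) = q2" using V q by auto
    have pc: "pcat Q1 q1 q2 = map_option U (pcat Q2 (?V q1) (?V q2))"
      using path_iso_pcat[OF v] unfolding u .
    show ?thesis
    proof (cases "pcat Q2 (?V q1) (?V q2)")
      case None then show ?thesis using pc by simp
    next
      case (Some r) then show ?thesis using pc VU[OF valid_path_pcat[OF v Some]] by simp
    qed
  qed
  moreover have "plen (?V q) = plen q" if "valid_path Q1 q" for q
    using V[OF that] path_iso_plen by metis
  ultimately show ?thesis
    unfolding path_iso_def using bij_betw_inv_into[OF path_iso_bij] by blast
qed

lemma pullback_in_path_algebra: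
  assumes "x \<in> path_algebra Q1"
  shows "pullback Q2 U x \<in> path_algebra Q2"
proof -
  let ?B = "{p. valid_path Q2 p \<and> x (U p) \<noteq> 0}"
  have "finite {p. x p \<noteq> 0}" using assms by (simp add: path_algebra_def)
  then have "finite (U ` ?B)" by (rule finite_subset[rotated]) blast
  moreover have "inj_on U ?B" using path_iso_inj_on by (rule inj_on_subset) blast
  ultimately have "finite ?B" by (rule finite_imageD)
  moreover have "{p. pullback Q2 U x p \<noteq> 0} = ?B" by (auto simp: pullback_def)
  ultimately show ?thesis by (auto simp: path_algebra_def pullback_def)
qed

lemma pullback_pone: "pullback Q2 U (pone Q1) = pone Q2"
  by (auto simp: pullback_def pone_eq path_iso_valid path_iso_plen)

lemma pullback_pbasis:
  assumes "valid_path Q2 p"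
  shows "pullback Q2 U (pbasis (U p)) = pbasis p"
proof
  fix q
  show "pullback Q2 U (pbasis (U p)) q = pbasis p q"
    using path_iso_inj[OF _ assms, of q] assms by (auto simp: pullback_def pbasis_def)
qed

lemma pullback_pbasis_paths_length:
  "pullback Q2 U ` pbasis ` {q. valid_path Q1 q \<and> plen q = d} = pbasis ` {p. valid_path Q2 p \<and> plen p = d}"
proof -
  have "pullback Q2 U ` pbasis ` U ` {p. valid_path Q2 p \<and> plen p = d}
      = pbasis ` {p. valid_path Q2 p \<and> plen p = d}"
    unfolding image_image using pullback_pbasis by (intro image_cong) auto
  then show ?thesis unfolding path_iso_image_paths_length .
qed

lemma path_iso_factorizations:
  assumes a: "a \<in> path_algebra Q1" and x: "x \<in> path_algebra Q1" and p: "valid_path Q2 p"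
  shows "bij_betw (map_prod U U)
    {(p1, p2). pullback Q2 U a p1 \<noteq> 0 \<and> pullback Q2 U x p2 \<noteq> 0 \<and> pcat Q2 p1 p2 = Some p}
    {(q1, q2). a q1 \<noteq> 0 \<and> x q2 \<noteq> 0 \<and> pcat Q1 q1 q2 = Some (U p)}"
    (is "bij_betw _ ?A2 ?A1")
proof (rule bij_betw_imageI)
  have nz: "?A2 \<subseteq> {p. valid_path Q2 p} \<times> {p. valid_path Q2 p}"
    by (auto simp: pullback_def split: if_splits)
  then show "inj_on (map_prod U U) ?A2"
    using map_prod_inj_on[OF path_iso_inj_on path_iso_inj_on] by (rule inj_on_subset[rotated])
  show "map_prod U U ` ?A2 = ?A1"
  proof
    show "map_prod U U ` ?A2 \<subseteq> ?A1"
    proof (rule image_subsetI)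
      fix pp assume pp: "pp \<in> ?A2"
      obtain p1 p2 where [simp]: "pp = (p1, p2)" by (cases pp)
      have "valid_path Q2 p1" "valid_path Q2 p2" using nz pp by auto
      then show "map_prod U U pp \<in> ?A1"
        using pp path_iso_pcat_iff[OF _ _ p] by (simp add: pullback_def)
    qed
    show "?A1 \<subseteq> map_prod U U ` ?A2"
    proof clarify
      fix q1 q2 assume q: "a q1 \<noteq> 0" "x q2 \<noteq> 0" "pcat Q1 q1 q2 = Some (U p)"
      then have "valid_path Q1 q1" "valid_path Q1 q2" using a x by (auto simp: path_algebra_def)
      then obtain p1 p2 where p12: "valid_path Q2 p1" "valid_path Q2 p2" "q1 = U p1" "q2 = U p2"
        using path_iso_surj by metis
      then have "(p1, p2) \<in> ?A2" using q path_iso_pcat_iff[OF p12(1,2) p] by (simp add: pullback_def)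
      then show "(q1, q2) \<in> map_prod U U ` ?A2" using p12(3,4) by force
    qed
  qed
qed

lemma pullback_pmult:
  assumes a: "a \<in> path_algebra Q1" and x: "x \<in> path_algebra Q1"
  shows "pullback Q2 U (pmult Q1 a x) = pmult Q2 (pullback Q2 U a) (pullback Q2 U x)"
proof
  fix p
  let ?A2 = "{(p1, p2). pullback Q2 U a p1 \<noteq> 0 \<and> pullback Q2 U x p2 \<noteq> 0 \<and> pcat Q2 p1 p2 = Some p}"
  let ?A1 = "{(q1, q2). a q1 \<noteq> 0 \<and> x q2 \<noteq> 0 \<and> pcat Q1 q1 q2 = Some (U p)}"
  have nz: "valid_path Q2 p1 \<and> valid_path Q2 p2" if "(p1, p2) \<in> ?A2" for p1 p2
    using that by (auto simp: pullback_def split: if_splits)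
  show "pullback Q2 U (pmult Q1 a x) p = pmult Q2 (pullback Q2 U a) (pullback Q2 U x) p"
  proof (cases "valid_path Q2 p")
    case False
    then have "?A2 = {}" using nz valid_path_pcat by blast
    then show ?thesis using False by (simp only: pmult_def sum.empty pullback_def) simp
  next
    case True
    have "(\<Sum>(q1, q2)\<in>?A1. a q1 * x q2) = (\<Sum>(p1, p2)\<in>?A2. a (U p1) * x (U p2))"
      using path_iso_factorizations[OF a x True]
      by (subst sum.reindex_bij_betw[symmetric]) (auto simp: case_prod_beta)
    also have "\<dots> = (\<Sum>(p1, p2)\<in>?A2. pullback Q2 U a p1 * pullback Q2 U x p2)"
      using nz by (intro sum.cong) (auto simp: pullback_def)
    finally show ?thesis using True by (simp add: pmult_def pullback_def)
  qed
qed

lemma pullback_gen_ideal: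
  assumes R1: "R1 \<subseteq> path_algebra Q1" and gens: "pullback Q2 U ` R1 \<subseteq> gen_ideal Q2 R2"
    and "y \<in> gen_ideal Q1 R1"
  shows "pullback Q2 U y \<in> gen_ideal Q2 R2"
  using assms(3)
proof induction
  case (gen r) then show ?case using gens by blast
next
  case zero
  show ?case unfolding pullback_pzero by (rule gen_ideal.zero)
next
  case (add y z)
  show ?case using add.IH unfolding pullback_padd by (rule gen_ideal.add)
next
  case (lmult y a)
  then show ?case
    using gen_ideal_subset_path_algebra[OF R1] pullback_pmult pullback_in_path_algebra
    by (metis gen_ideal.lmult subsetD)
next
  case (rmult y a)
  then show ?case
    using gen_ideal_subset_path_algebra[OF R1] pullback_pmult pullback_in_path_algebra
    by (metis gen_ideal.rmult subsetD)
qed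

lemma pullback_pullback_inv:
  assumes "y \<in> path_algebra Q2"
  shows "pullback Q2 U (pullback Q1 (inv_into {p. valid_path Q2 p} U) y) = y"
proof
  fix p
  show "pullback Q2 U (pullback Q1 (inv_into {p. valid_path Q2 p} U) y) p = y p"
  proof (cases "valid_path Q2 p")
    case True
    then show ?thesis
      using path_iso_valid bij_betw_inv_into_left[OF path_iso_bij] by (simp add: pullback_def)
  next
    case False
    then show ?thesis using assms by (auto simp: pullback_def path_algebra_def)
  qed
qed

lemma pullback_inv_pullback:
  assumes "x \<in> path_algebra Q1"
  shows "pullback Q1 (inv_into {p. valid_path Q2 p} U) (pullback Q2 U x) = x"
proof
  fix q
  show "pullback Q1 (inv_into {p. valid_path Q2 p} U) (pullback Q2 U x) q = x q"
  proof (cases "valid_path Q1 q")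
    case True
    then show ?thesis
      using bij_betwE[OF bij_betw_inv_into[OF path_iso_bij]] bij_betw_inv_into_right[OF path_iso_bij]
      by (simp add: pullback_def)
  next
    case False
    then show ?thesis using assms by (auto simp: pullback_def path_algebra_def)
  qed
qed

end

lemma psub_self: "psub f f = pzero"
  by (simp add: psub_def pzero_def)

lemma quot_alg_iso_of_path_iso:
  fixes R1 :: "(('a, 'b) qpath \<Rightarrow> 'k::field) set" and Q1 :: "('a, 'b) quiver" and Q2 :: "('c, 'd) quiver"
  assumes iso: "path_iso Q1 Q2 U"
    and R1: "R1 \<subseteq> path_algebra Q1" and R2: "R2 \<subseteq> path_algebra Q2"
    and gens1: "pullback Q2 U ` R1 \<subseteq> gen_ideal Q2 R2"
    and gens2: "pullback Q1 (inv_into {p. valid_path Q2 p} U) ` R2 \<subseteq> gen_ideal Q1 R1"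
  shows "quot_alg_iso Q1 (gen_ideal Q1 R1) Q2 (gen_ideal Q2 R2)"
  unfolding quot_alg_iso_def
proof (intro exI[of _ "pullback Q2 U"] conjI ballI allI)
  let ?V = "inv_into {p. valid_path Q2 p} U"
  have iso': "path_iso Q2 Q1 ?V" by (rule path_iso_inv[OF iso])
  have zero: "psub f f \<in> gen_ideal Q2 R2" for f :: "('c, 'd) qpath \<Rightarrow> 'k"
    unfolding psub_self by (rule gen_ideal.zero)
  fix x y :: "('a, 'b) qpath \<Rightarrow> 'k" and c :: 'k
  show "x \<in> path_algebra Q1 \<Longrightarrow> pullback Q2 U x \<in> path_algebra Q2"
    by (rule pullback_in_path_algebra[OF iso])
  show "psub (pullback Q2 U (padd x y)) (padd (pullback Q2 U x) (pullback Q2 U y)) \<in> gen_ideal Q2 R2"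
    unfolding pullback_padd by (rule zero)
  show "psub (pullback Q2 U (psmult c x)) (psmult c (pullback Q2 U x)) \<in> gen_ideal Q2 R2"
    unfolding pullback_psmult by (rule zero)
  show "x \<in> path_algebra Q1 \<Longrightarrow> y \<in> path_algebra Q1 \<Longrightarrow>
      psub (pullback Q2 U (pmult Q1 x y)) (pmult Q2 (pullback Q2 U x) (pullback Q2 U y)) \<in> gen_ideal Q2 R2"
    using zero by (simp add: pullback_pmult[OF iso])
  show "psub (pullback Q2 U (pone Q1)) (pone Q2) \<in> gen_ideal Q2 R2"
    using zero by (simp add: pullback_pone[OF iso])
  show "pullback Q2 U x \<in> gen_ideal Q2 R2 \<longleftrightarrow> x \<in> gen_ideal Q1 R1" if "x \<in> path_algebra Q1"
  proof
    assume "pullback Q2 U x \<in> gen_ideal Q2 R2"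
    then have "pullback Q1 ?V (pullback Q2 U x) \<in> gen_ideal Q1 R1"
      by (rule pullback_gen_ideal[OF iso' R2 gens2])
    then show "x \<in> gen_ideal Q1 R1" unfolding pullback_inv_pullback[OF iso that] .
  qed (rule pullback_gen_ideal[OF iso R1 gens1])
next
  fix y :: "('c, 'd) qpath \<Rightarrow> 'k"
  assume y: "y \<in> path_algebra Q2"
  let ?x = "pullback Q1 (inv_into {p. valid_path Q2 p} U) y"
  have "?x \<in> path_algebra Q1" using pullback_in_path_algebra[OF path_iso_inv[OF iso] y] .
  moreover have "psub (pullback Q2 U ?x) y \<in> gen_ideal Q2 R2"
    unfolding pullback_pullback_inv[OF iso y] psub_self by (rule gen_ideal.zero)
  ultimately show "\<exists>x\<in>path_algebra Q1. psub (pullback Q2 U x) y \<in> gen_ideal Q2 R2" by blast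
qed

lemma quot_alg_iso_paths_length:
  assumes iso: "path_iso Q1 Q2 U"
  shows "quot_alg_iso Q1 (gen_ideal Q1 (pbasis ` {p. valid_path Q1 p \<and> plen p = d}))
           Q2 (gen_ideal Q2 (pbasis ` {p. valid_path Q2 p \<and> plen p = d} :: (_ \<Rightarrow> 'k::field) set))"
proof (rule quot_alg_iso_of_path_iso[OF iso])
  show "pbasis ` {p. valid_path Q1 p \<and> plen p = d} \<subseteq> path_algebra Q1"
    "pbasis ` {p. valid_path Q2 p \<and> plen p = d} \<subseteq> path_algebra Q2"
    by (auto intro: pbasis_in_path_algebra)
  show "pullback Q2 U ` pbasis ` {p. valid_path Q1 p \<and> plen p = d}
      \<subseteq> gen_ideal Q2 (pbasis ` {p. valid_path Q2 p \<and> plen p = d})"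
    unfolding pullback_pbasis_paths_length[OF iso] by (blast intro: gen_ideal.gen)
  show "pullback Q1 (inv_into {p. valid_path Q2 p} U) ` pbasis ` {p. valid_path Q2 p \<and> plen p = d}
      \<subseteq> gen_ideal Q1 (pbasis ` {p. valid_path Q1 p \<and> plen p = d})"
    unfolding pullback_pbasis_paths_length[OF path_iso_inv[OF iso]] by (blast intro: gen_ideal.gen)
qed

section \<open>The oriented cycle\<close>

definition cycle_path :: "nat \<Rightarrow> nat \<Rightarrow> nat \<Rightarrow> (nat, nat) qpath" where
  "cycle_path n i l = Arrs (map (\<lambda>k. (i + k) mod n) [0..<l])"

lemma valid_cycle_path: "0 < n \<Longrightarrow> 0 < l \<Longrightarrow> valid_path (cycle_quiver n) (cycle_path n i l)"
  by (auto simp: cycle_path_def cycle_quiver_def mod_Suc_eq)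

lemma valid_path_cycle_quiver_Arrs:
  assumes "valid_path (cycle_quiver n) (Arrs ys)"
  shows "Arrs ys = cycle_path n (hd ys) (length ys)" "hd ys < n"
proof -
  have ys: "ys \<noteq> []" "set ys \<subseteq> {..<n}" "\<And>k. Suc k < length ys \<Longrightarrow> Suc (ys ! k) mod n = ys ! Suc k"
    using assms by (auto simp: cycle_quiver_def)
  show "hd ys < n" using ys(1,2) hd_in_set by blast
  have nth: "ys ! k = (hd ys + k) mod n" if "k < length ys" for k
    using that
  proof (induction k)
    case 0
    then show ?case using \<open>hd ys < n\<close> ys(1) by (simp add: hd_conv_nth)
  next
    case (Suc k)
    then show ?case using ys(3)[of k] by (simp add: mod_Suc_eq)
  qed
  show "Arrs ys = cycle_path n (hd ys) (length ys)"
    unfolding cycle_path_def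
  proof (intro arg_cong[where f = Arrs] nth_equalityI)
    fix k assume "k < length ys"
    then show "ys ! k = map (\<lambda>k. (hd ys + k) mod n) [0..<length ys] ! k" using nth by simp
  qed simp
qed

lemma paths_length_cycle_quiver:
  assumes "0 < n" "0 < l"
  shows "{p. valid_path (cycle_quiver n) p \<and> plen p = l} = (\<lambda>i. cycle_path n i l) ` {..<n}"
proof (intro equalityI subsetI)
  fix p assume p: "p \<in> {p. valid_path (cycle_quiver n) p \<and> plen p = l}"
  then obtain ys where ys: "p = Arrs ys" using assms(2) by (cases p) auto
  then have "valid_path (cycle_quiver n) (Arrs ys)" "length ys = l" using p by auto
  then show "p \<in> (\<lambda>i. cycle_path n i l) ` {..<n}"
    using ys valid_path_cycle_quiver_Arrs[of n ys] by blast
next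
  fix p assume "p \<in> (\<lambda>i. cycle_path n i l) ` {..<n}"
  then show "p \<in> {p. valid_path (cycle_quiver n) p \<and> plen p = l}"
    using assms valid_cycle_path by (auto simp: cycle_path_def)
qed

lemma valid_path_cycle_quiver_ends:
  "valid_path (cycle_quiver n) p \<Longrightarrow> pstart (cycle_quiver n) p < n \<and> pend (cycle_quiver n) p < n"
proof (cases p)
  case (Arrs ys)
  moreover assume "valid_path (cycle_quiver n) p"
  ultimately have "ys \<noteq> []" "set ys \<subseteq> {..<n}" by (auto simp: cycle_quiver_def)
  then have "hd ys < n" by (meson hd_in_set lessThan_iff subsetD)
  then show ?thesis using Arrs by (simp add: cycle_quiver_def)
qed (auto simp: cycle_quiver_def)

section \<open>Brauer graphs\<close>

lemma brauer_graphD: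
  assumes "brauer_graph V E ord m"
  shows "finite V" "finite E" "E \<noteq> {}" "\<alpha> \<in> V \<Longrightarrow> set (ord \<alpha>) \<subseteq> E"
    "s \<in> E \<Longrightarrow> (\<Sum>\<alpha>\<in>V. count_list (ord \<alpha>) s) = 2"
    "\<alpha> \<in> V \<Longrightarrow> \<beta> \<in> V \<Longrightarrow> (\<alpha>, \<beta>) \<in> (bg_adj V ord)\<^sup>*"
    "\<alpha> \<in> V \<Longrightarrow> m \<alpha> > 0"
  using assms unfolding brauer_graph_def by blast+

lemma count_list_eq_card: "count_list xs s = card {i. i < length xs \<and> xs ! i = s}"
  by (simp add: count_list_eq_length_filter length_filter_conv_card eq_commute)

lemma count_list_pos_iff: "count_list xs x > 0 \<longleftrightarrow> x \<in> set xs"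
  by (metis count_list_0_iff gr0I less_numeral_extra(3))

lemma bcycle_consecutive:
  assumes "bcycle ord h = u @ [a, b] @ w"
  shows "b = hsucc ord a"
proof -
  let ?L = "length (ord (fst h))" and ?k = "length u"
  have len: "Suc ?k < ?L" using arg_cong[OF assms, of length] by (simp add: bcycle_def)
  have "a = bcycle ord h ! ?k" "b = bcycle ord h ! Suc ?k" using assms by (simp_all add: nth_append)
  then have "a = (fst h, (snd h + ?k) mod ?L)" "b = (fst h, (snd h + Suc ?k) mod ?L)"
    using len by (simp_all add: bcycle_def)
  then show ?thesis by (simp add: hsucc_def mod_Suc_eq)
qed

lemma hsucc_pred:
  assumes "i < length (ord \<alpha>)"
  shows "hsucc ord (\<alpha>, (i + length (ord \<alpha>) - 1) mod length (ord \<alpha>)) = (\<alpha>, i)"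
proof -
  let ?L = "length (ord \<alpha>)"
  have "Suc ((i + ?L - 1) mod ?L) mod ?L = Suc (i + ?L - 1) mod ?L" by (simp add: mod_Suc_eq)
  also have "Suc (i + ?L - 1) = i + ?L" using assms by simp
  finally show ?thesis using assms by (simp add: hsucc_def)
qed

lemma bg_quiver_not_A2_11:
  "\<not> is_A2_11 V E ord m \<Longrightarrow> bg_quiver V E ord m =
     \<lparr>qverts = E, qarrs = {h \<in> halfedges V ord. \<not> truncated_at ord m (hedge ord h) (fst h)},
      qsrc = hedge ord, qtgt = (\<lambda>h. hedge ord (hsucc ord h))\<rparr>"
  by (simp add: bg_quiver_def)

text \<open>A relation of length 2 cannot lie in an ideal generated in degree at least 3.\<close>
lemma d_homogeneous_bg_ideal_no_short_relations:
  fixes q :: "'e \<Rightarrow> 'v \<Rightarrow> 'k::field"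
  assumes dh: "d_homogeneous (bg_quiver V E ord m) (bg_ideal V E ord m q) d" and d: "d \<ge> 3"
  shows "\<not> is_A2_11 V E ord m" "bg_rel_three V E ord m = ({} :: (('e, 'v \<times> nat) qpath \<Rightarrow> 'k) set)"
proof -
  have short: "pbasis (Arrs [a, b]) \<notin> bg_relations V E ord m q" for a b
  proof
    assume "pbasis (Arrs [a, b]) \<in> bg_relations V E ord m q"
    then have "pbasis (Arrs [a, b]) \<in> bg_ideal V E ord m q"
      unfolding bg_ideal_def by (rule gen_ideal.gen)
    then have "d \<le> plen (Arrs [a, b] :: ('e, 'v \<times> nat) qpath)"
      by (rule d_homogeneous_support_plen_ge[OF dh]) (simp add: pbasis_self)
    then show False using d by simp
  qed
  then show nA: "\<not> is_A2_11 V E ord m" by (metis bg_relations_def singletonI)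
  show "bg_rel_three V E ord m = ({} :: (('e, 'v \<times> nat) qpath \<Rightarrow> 'k) set)"
    using short nA by (auto simp: bg_relations_def bg_rel_three_def Let_def)
qed

context
  fixes V :: "'v set" and E :: "'e set" and ord :: "'v \<Rightarrow> 'e list" and m :: "'v \<Rightarrow> nat"
  assumes bg: "brauer_graph V E ord m"
begin

lemma count_list_two_ends:
  assumes "s \<in> E" "\<alpha> \<in> V" "\<beta> \<in> V" "\<alpha> \<noteq> \<beta>"
  shows "count_list (ord \<alpha>) s + count_list (ord \<beta>) s \<le> 2"
proof -
  have "(\<Sum>x\<in>{\<alpha>, \<beta>}. count_list (ord x) s) \<le> (\<Sum>x\<in>V. count_list (ord x) s)"
    using assms(2,3) brauer_graphD(1)[OF bg] by (intro sum_mono2) auto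
  then show ?thesis using assms brauer_graphD(5)[OF bg] by simp
qed

lemma no_three_ends:
  assumes "s \<in> E" "\<alpha> \<in> V" "\<beta> \<in> V" "\<gamma> \<in> V" "\<alpha> \<noteq> \<beta>" "\<alpha> \<noteq> \<gamma>" "\<beta> \<noteq> \<gamma>"
    and "s \<in> set (ord \<alpha>)" "s \<in> set (ord \<beta>)" "s \<in> set (ord \<gamma>)"
  shows False
proof -
  have "(\<Sum>x\<in>{\<alpha>, \<beta>, \<gamma>}. count_list (ord x) s) \<le> (\<Sum>x\<in>V. count_list (ord x) s)"
    using assms(2-4) brauer_graphD(1)[OF bg] by (intro sum_mono2) auto
  moreover have "count_list (ord \<alpha>) s > 0" "count_list (ord \<beta>) s > 0" "count_list (ord \<gamma>) s > 0"
    using assms(8-10) by (simp_all add: count_list_pos_iff)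
  ultimately show False using assms(1-7) brauer_graphD(5)[OF bg] by simp
qed

lemma count_list_eq_1_if_two_ends:
  assumes "s \<in> E" "\<alpha> \<in> V" "\<beta> \<in> V" "\<alpha> \<noteq> \<beta>" "s \<in> set (ord \<alpha>)" "s \<in> set (ord \<beta>)"
  shows "count_list (ord \<alpha>) s = 1"
proof -
  have "count_list (ord \<alpha>) s > 0" "count_list (ord \<beta>) s > 0"
    using assms(5,6) by (simp_all add: count_list_pos_iff)
  then show ?thesis using count_list_two_ends[OF assms(1-4)] by linarith
qed

lemma edge_has_end:
  assumes "s \<in> E"
  obtains \<alpha> where "\<alpha> \<in> V" "s \<in> set (ord \<alpha>)"
proof -
  have "(\<Sum>\<alpha>\<in>V. count_list (ord \<alpha>) s) \<noteq> 0" using brauer_graphD(5)[OF bg assms] by simp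
  then obtain \<alpha> where "\<alpha> \<in> V" "count_list (ord \<alpha>) s \<noteq> 0" by (meson sum.neutral)
  then show thesis using that by (simp add: count_list_0_iff)
qed

lemma other_end:
  assumes "s \<in> E" "l \<in> V" "ord l = [s]"
  obtains \<gamma> where "\<gamma> \<in> V" "\<gamma> \<noteq> l" "s \<in> set (ord \<gamma>)"
proof -
  have "(\<Sum>x\<in>V. count_list (ord x) s) = count_list (ord l) s + (\<Sum>x\<in>V - {l}. count_list (ord x) s)"
    using sum.remove[OF brauer_graphD(1)[OF bg] assms(2)] by simp
  then have "(\<Sum>x\<in>V - {l}. count_list (ord x) s) = 1"
    using brauer_graphD(5)[OF bg assms(1)] assms(3) by simp
  then obtain \<gamma> where "\<gamma> \<in> V - {l}" "count_list (ord \<gamma>) s \<noteq> 0"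
    by (metis one_neq_zero sum.neutral)
  then show ?thesis using that by (auto simp: count_list_0_iff)
qed

lemma closed_under_adjacency:
  assumes "c \<in> V" "c \<in> W"
    and closed: "\<And>\<alpha> \<beta> t. \<alpha> \<in> W \<Longrightarrow> \<alpha> \<in> V \<Longrightarrow> \<beta> \<in> V \<Longrightarrow> t \<in> set (ord \<alpha>) \<Longrightarrow> t \<in> set (ord \<beta>)
      \<Longrightarrow> \<beta> \<in> W"
  shows "V \<subseteq> W"
proof
  fix \<beta> assume "\<beta> \<in> V"
  with brauer_graphD(6)[OF bg assms(1)] have "(c, \<beta>) \<in> (bg_adj V ord)\<^sup>*" .
  then show "\<beta> \<in> W"
    by (induction rule: rtrancl_induct) (use assms in \<open>auto simp: bg_adj_def\<close>)
qed

lemma two_halfedges: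
  assumes "s \<in> E"
  obtains h1 h2 where "h1 \<in> halfedges V ord" "h2 \<in> halfedges V ord" "h1 \<noteq> h2"
    "hedge ord h1 = s" "hedge ord h2 = s"
proof -
  have "{h \<in> halfedges V ord. hedge ord h = s} = (SIGMA \<alpha>:V. {i. i < length (ord \<alpha>) \<and> ord \<alpha> ! i = s})"
    by (auto simp: halfedges_def hedge_def)
  moreover have "card (SIGMA \<alpha>:V. {i. i < length (ord \<alpha>) \<and> ord \<alpha> ! i = s}) = 2"
    using brauer_graphD(1)[OF bg] brauer_graphD(5)[OF bg assms] by (simp add: count_list_eq_card)
  ultimately have "card {h \<in> halfedges V ord. hedge ord h = s} = 2" by simp
  then show ?thesis using that unfolding card_2_iff by blast
qed

lemma is_A2_11_if_truncated_at_both_ends: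
  assumes "l \<in> V" "c \<in> V" "l \<noteq> c" "ord l = [s]" "ord c = [s]" "m l = 1" "m c = 1"
  shows "is_A2_11 V E ord m"
proof -
  have sE: "s \<in> E" using brauer_graphD(4)[OF bg assms(1)] assms(4) by simp
  have "V \<subseteq> {l, c}"
  proof (rule closed_under_adjacency[OF assms(1)])
    fix \<alpha> \<beta> t assume a: "\<alpha> \<in> {l, c}" "\<beta> \<in> V" "t \<in> set (ord \<alpha>)" "t \<in> set (ord \<beta>)"
    then have "t = s" using assms(4,5) by auto
    show "\<beta> \<in> {l, c}"
    proof (rule ccontr)
      assume "\<beta> \<notin> {l, c}"
      then show False
        using no_three_ends[OF sE assms(1,2) a(2) assms(3)] a(4) \<open>t = s\<close> assms(4,5) by auto
    qed
  qed simp
  then have V: "V = {l, c}" using assms(1,2) by blast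
  have "E = {s}"
    using sE V assms(4,5) edge_has_end by (metis empty_iff insert_iff subsetI subset_singletonD list.set)
  then show ?thesis unfolding is_A2_11_def using V assms by blast
qed

lemma is_A2_11_if_star_1:
  assumes "is_star V E ord c 1" "m c = 1" "\<forall>\<alpha>\<in>V - {c}. m \<alpha> = 1"
  shows "is_A2_11 V E ord m"
proof -
  have c: "c \<in> V" "card V = 2" "card E = 1" "\<forall>s\<in>E. count_list (ord c) s = 1"
    and leaves: "\<forall>\<alpha>\<in>V - {c}. length (ord \<alpha>) = 1"
    using assms(1) by (auto simp: is_star_def)
  obtain s where E: "E = {s}" using card_1_singletonE[OF c(3)] by blast
  obtain l where l: "l \<in> V" "l \<noteq> c" using c(1,2) by (metis card_2_iff insertI1 insert_commute)
  have sub: "set (ord \<alpha>) \<subseteq> {s}" if "\<alpha> \<in> V" for \<alpha>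
    using brauer_graphD(4)[OF bg that] E by simp
  have single: "ord \<alpha> = [s]" if "\<alpha> \<in> V" "length (ord \<alpha>) = 1" for \<alpha>
    using sub[OF that(1)] that(2) by (auto simp: length_Suc_conv)
  have "length (ord c) = 1" using sum_count_set[OF sub[OF c(1)]] c(4) E by simp
  then have "ord c = [s]" "ord l = [s]" using single c(1) l leaves by blast+
  then show ?thesis using is_A2_11_if_truncated_at_both_ends[OF l(1) c(1) l(2)] assms(2,3) l by simp
qed

text \<open>If \<open>h1 = (\<alpha>, i)\<close> and \<open>h2\<close> are the two occurrences of a non-truncated edge, then the
  predecessor of \<open>h1\<close> at \<open>\<alpha>\<close> followed by \<open>h2\<close> is a type three relation.\<close>
lemma truncated_edge_if_no_rel_three:
  assumes nA: "\<not> is_A2_11 V E ord m"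
    and no3: "bg_rel_three V E ord m = ({} :: (('e, 'v \<times> nat) qpath \<Rightarrow> 'k::field) set)"
    and s: "s \<in> E"
  shows "truncated_edge V ord m s"
proof (rule ccontr)
  assume nt: "\<not> truncated_edge V ord m s"
  obtain h1 h2 where h: "h1 \<in> halfedges V ord" "h2 \<in> halfedges V ord" "h1 \<noteq> h2"
    "hedge ord h1 = s" "hedge ord h2 = s" using two_halfedges[OF s] by blast
  obtain \<alpha> i where h1: "h1 = (\<alpha>, i)" by (cases h1)
  have nt_at: "\<not> truncated_at ord m s (fst h)" if "h \<in> halfedges V ord" "hedge ord h = s" for h
    using nt that by (auto simp: truncated_edge_def halfedges_def hedge_def)
  define L where "L = length (ord \<alpha>)"
  define a where "a = (\<alpha>, (i + L - 1) mod L)"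
  have iL: "\<alpha> \<in> V" "i < L" using h(1) h1 by (auto simp: halfedges_def L_def)
  have ha: "hsucc ord a = h1" using hsucc_pred[of i ord \<alpha>] iL h1 by (simp add: a_def L_def)
  have a_eq: "a = h1" if "L = 1" using iL that by (simp add: a_def h1)
  have aQ: "a \<in> qarrs (bg_quiver V E ord m)"
  proof -
    have "0 < length (ord \<alpha>)" using iL unfolding L_def by linarith
    then have "a \<in> halfedges V ord" using iL by (simp add: a_def halfedges_def L_def)
    moreover have "\<not> truncated_at ord m (hedge ord a) (fst a)"
      using a_eq nt_at[OF h(1,4)] h(4) by (auto simp: truncated_at_def a_def L_def)
    ultimately show ?thesis using bg_quiver_not_A2_11[OF nA] by simp
  qed
  have bQ: "h2 \<in> qarrs (bg_quiver V E ord m)"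
    using nt_at[OF h(2,5)] h(2,5) bg_quiver_not_A2_11[OF nA] by simp
  have tgt: "qtgt (bg_quiver V E ord m) a = qsrc (bg_quiver V E ord m) h2"
    using bg_quiver_not_A2_11[OF nA] ha h by simp
  have "\<not> (\<exists>h \<in> qarrs (bg_quiver V E ord m). \<exists>u w. bcycle ord h = u @ [a, h2] @ w)"
    using bcycle_consecutive ha h(3) by metis
  moreover have "\<not> (a = h2 \<and> length (ord (fst a)) = 1)"
    using a_eq h(3) by (auto simp: a_def L_def)
  ultimately have "(pbasis (Arrs [a, h2]) :: _ \<Rightarrow> 'k) \<in> bg_rel_three V E ord m"
    unfolding bg_rel_three_def Let_def using aQ bQ tgt by blast
  then show False using no3 by simp
qed

lemma bij_betw_leaf_edge:
  assumes c: "c \<in> V"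
    and leaves: "\<And>\<alpha>. \<alpha> \<in> V - {c} \<Longrightarrow> \<exists>t. ord \<alpha> = [t] \<and> t \<in> set (ord c)"
    and edges: "\<And>s. s \<in> E \<Longrightarrow> \<exists>l \<in> V - {c}. ord l = [s]"
  shows "bij_betw (\<lambda>\<alpha>. hd (ord \<alpha>)) (V - {c}) E"
proof (rule bij_betw_imageI)
  show "inj_on (\<lambda>\<alpha>. hd (ord \<alpha>)) (V - {c})"
  proof (rule inj_onI, rule ccontr)
    fix \<alpha> \<beta> assume a: "\<alpha> \<in> V - {c}" "\<beta> \<in> V - {c}" "hd (ord \<alpha>) = hd (ord \<beta>)" "\<alpha> \<noteq> \<beta>"
    obtain t where t: "ord \<alpha> = [t]" "t \<in> set (ord c)" using leaves[OF a(1)] by blast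
    moreover obtain t' where "ord \<beta> = [t']" using leaves[OF a(2)] by blast
    moreover have "t \<in> E" using brauer_graphD(4)[OF bg c] t by blast
    ultimately show False using no_three_ends[OF _ c, of t \<alpha> \<beta>] a by auto
  qed
  show "(\<lambda>\<alpha>. hd (ord \<alpha>)) ` (V - {c}) = E"
  proof
    show "(\<lambda>\<alpha>. hd (ord \<alpha>)) ` (V - {c}) \<subseteq> E"
    proof (rule image_subsetI)
      fix \<alpha> assume "\<alpha> \<in> V - {c}"
      then obtain t where "ord \<alpha> = [t]" "t \<in> set (ord c)" using leaves by blast
      then show "hd (ord \<alpha>) \<in> E" using brauer_graphD(4)[OF bg c] by auto
    qed
    show "E \<subseteq> (\<lambda>\<alpha>. hd (ord \<alpha>)) ` (V - {c})"
    proof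
      fix s assume "s \<in> E"
      then obtain l where "l \<in> V - {c}" "ord l = [s]" using edges by blast
      then show "s \<in> (\<lambda>\<alpha>. hd (ord \<alpha>)) ` (V - {c})" by (intro image_eqI[of _ _ l]) auto
    qed
  qed
qed

lemma is_star_if_leaves:
  assumes c: "c \<in> V"
    and leaves: "\<And>\<alpha>. \<alpha> \<in> V - {c} \<Longrightarrow> \<exists>t. ord \<alpha> = [t] \<and> t \<in> set (ord c)"
    and edges: "\<And>s. s \<in> E \<Longrightarrow> \<exists>l \<in> V - {c}. ord l = [s]"
  shows "is_star V E ord c (card E)"
proof -
  have count: "count_list (ord c) s = 1" if s: "s \<in> E" for s
  proof -
    obtain l where l: "l \<in> V - {c}" "ord l = [s]" using edges[OF s] by blast
    then have "s \<in> set (ord c)" using leaves[OF l(1)] by auto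
    with l show ?thesis using count_list_eq_1_if_two_ends[OF s c, of l] by auto
  qed
  have "card (V - {c}) = card E" using bij_betw_leaf_edge[OF c leaves edges] by (rule bij_betw_same_card)
  then have "card V = card E + 1" using c brauer_graphD(1)[OF bg] by (metis card_Suc_Diff1 Suc_eq_plus1)
  then show ?thesis using c count leaves by (fastforce simp: is_star_def)
qed

lemma leaves_at_center:
  assumes c: "c \<in> V"
    and leaf_of_edge: "\<And>s. s \<in> E \<Longrightarrow> \<exists>l\<in>V. l \<noteq> c \<and> ord l = [s] \<and> m l = 1"
    and "\<alpha> \<in> V - {c}"
  shows "\<exists>t. ord \<alpha> = [t] \<and> m \<alpha> = 1 \<and> t \<in> set (ord c)"
proof -
  define W where "W = {c} \<union> {\<alpha> \<in> V. \<exists>t. ord \<alpha> = [t] \<and> m \<alpha> = 1 \<and> t \<in> set (ord c)}"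
  have "V \<subseteq> W"
  proof (rule closed_under_adjacency[OF c])
    fix \<alpha> \<beta> t assume a: "\<alpha> \<in> W" "\<alpha> \<in> V" "\<beta> \<in> V" "t \<in> set (ord \<alpha>)" "t \<in> set (ord \<beta>)"
    have tE: "t \<in> E" using brauer_graphD(4)[OF bg] a(2,4) by blast
    show "\<beta> \<in> W"
    proof (cases "\<alpha> = c")
      case True
      obtain l where l: "l \<in> V" "l \<noteq> c" "ord l = [t]" "m l = 1" using leaf_of_edge[OF tE] by blast
      show ?thesis
      proof (cases "\<beta> = c \<or> \<beta> = l")
        case True then show ?thesis using l a \<open>\<alpha> = c\<close> by (auto simp: W_def)
      next
        case False then show ?thesis using no_three_ends[OF tE c l(1) a(3)] l a \<open>\<alpha> = c\<close> by auto
      qed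
    next
      case False
      then obtain t' where t': "ord \<alpha> = [t']" "t' \<in> set (ord c)" using a(1) by (auto simp: W_def)
      show ?thesis
      proof (cases "\<beta> = c \<or> \<beta> = \<alpha>")
        case True then show ?thesis using a(1) by (auto simp: W_def)
      next
        case False then show ?thesis using no_three_ends[OF tE c a(2,3)] a t' \<open>\<alpha> \<noteq> c\<close> by auto
      qed
    qed
  qed (simp add: W_def)
  then show ?thesis using assms(3) by (auto simp: W_def)
qed

lemma is_star_if_all_truncated:
  assumes nA: "\<not> is_A2_11 V E ord m" and trunc: "\<And>s. s \<in> E \<Longrightarrow> truncated_edge V ord m s"
  shows "\<exists>c. is_star V E ord c (card E) \<and> (\<forall>\<alpha>\<in>V - {c}. m \<alpha> = 1)"
proof -
  have trl: "\<exists>l\<in>V. ord l = [s] \<and> m l = 1" if "s \<in> E" for s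
    using trunc[OF that] unfolding truncated_edge_def truncated_at_def by blast
  obtain s0 where s0: "s0 \<in> E" using brauer_graphD(3)[OF bg] by blast
  obtain l0 where l0: "l0 \<in> V" "ord l0 = [s0]" "m l0 = 1" using trl[OF s0] by blast
  obtain c where c: "c \<in> V" "c \<noteq> l0" "s0 \<in> set (ord c)" using other_end[OF s0 l0(1,2)] by blast
  have leaf_of_edge: "\<exists>l\<in>V. l \<noteq> c \<and> ord l = [s] \<and> m l = 1" if s: "s \<in> E" for s
  proof -
    obtain l where l: "l \<in> V" "ord l = [s]" "m l = 1" using trl[OF s] by blast
    have "l \<noteq> c"
    proof
      assume "l = c"
      then have "ord c = [s0]" using l c by simp
      then show False
        using is_A2_11_if_truncated_at_both_ends[OF l0(1) c(1) c(2)[symmetric] l0(2)] l l0 nA \<open>l = c\<close> by simp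
    qed
    then show ?thesis using l by blast
  qed
  note leaves = leaves_at_center[OF c(1) leaf_of_edge]
  have "is_star V E ord c (card E)"
    using is_star_if_leaves[OF c(1)] leaves leaf_of_edge by blast
  then show ?thesis using leaves by blast
qed

end

section \<open>Stars\<close>

lemma nth_concat_replicate:
  "k < M * length xs \<Longrightarrow> concat (replicate M xs) ! k = xs ! (k mod length xs)"
proof (induction M arbitrary: k)
  case (Suc M)
  show ?case
  proof (cases "k < length xs")
    case False
    then have "k - length xs < M * length xs" using Suc.prems by simp
    then show ?thesis using Suc.IH False by (simp add: nth_append le_mod_geq)
  qed (simp add: nth_append)
qed simp

locale brauer_star =
  fixes V :: "'v set" and E :: "'e set" and ord :: "'v \<Rightarrow> 'e list" and m :: "'v \<Rightarrow> nat"
    and c :: 'v and n :: nat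
  assumes bg: "brauer_graph V E ord m" and star: "is_star V E ord c n"
    and leaf_mult: "\<forall>\<alpha>\<in>V - {c}. m \<alpha> = 1" and center_mult: "2 \<le> m c * n"
begin

abbreviation Q :: "('e, 'v \<times> nat) quiver" where
  "Q \<equiv> bg_quiver V E ord m"

lemma center_in_V: "c \<in> V"
  using star by (simp add: is_star_def)

lemma set_ord_center: "set (ord c) = E"
proof
  show "set (ord c) \<subseteq> E" using brauer_graphD(4)[OF bg center_in_V] .
  show "E \<subseteq> set (ord c)"
  proof
    fix s assume "s \<in> E"
    then have "count_list (ord c) s = 1" using star by (simp add: is_star_def)
    then show "s \<in> set (ord c)" by (metis count_notin zero_neq_one)
  qed
qed

lemma length_ord_center: "length (ord c) = n"
proof -
  have "length (ord c) = (\<Sum>s\<in>E. count_list (ord c) s)"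
    using sum_count_set[of "ord c" E] set_ord_center brauer_graphD(2)[OF bg] by simp
  also have "\<dots> = n" using star by (simp add: is_star_def)
  finally show ?thesis .
qed

lemma distinct_ord_center: "distinct (ord c)"
  using set_ord_center length_ord_center star by (intro card_distinct) (simp add: is_star_def)

lemma n_pos: "0 < n"
proof -
  have "card E = n" using star by (simp add: is_star_def)
  then show ?thesis using brauer_graphD(2,3)[OF bg] card_gt_0_iff by blast
qed

lemma ord_center_inject: "i < n \<Longrightarrow> j < n \<Longrightarrow> ord c ! i = ord c ! j \<longleftrightarrow> i = j"
  using distinct_ord_center length_ord_center nth_eq_iff_index_eq by blast

lemma leaf_ord: "\<alpha> \<in> V - {c} \<Longrightarrow> \<exists>s. ord \<alpha> = [s]"
  using star by (auto simp: is_star_def length_Suc_conv)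

lemma leaf_of_edge:
  assumes s: "s \<in> E"
  shows "\<exists>l\<in>V - {c}. ord l = [s]"
proof -
  have "(\<Sum>x\<in>V. count_list (ord x) s) = count_list (ord c) s + (\<Sum>x\<in>V - {c}. count_list (ord x) s)"
    using sum.remove[OF brauer_graphD(1)[OF bg] center_in_V] by simp
  then have "(\<Sum>x\<in>V - {c}. count_list (ord x) s) \<noteq> 0"
    using brauer_graphD(5)[OF bg s] star s by (simp add: is_star_def)
  then obtain l where l: "l \<in> V - {c}" "count_list (ord l) s \<noteq> 0" by (meson sum.neutral)
  moreover obtain t where "ord l = [t]" using leaf_ord[OF l(1)] by blast
  ultimately show ?thesis by (auto split: if_splits)
qed

lemma not_A2_11: "\<not> is_A2_11 V E ord m"
proof
  assume "is_A2_11 V E ord m"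
  then obtain \<alpha> \<beta> s where "V = {\<alpha>, \<beta>}" "E = {s}" "m \<alpha> = 1" "m \<beta> = 1"
    unfolding is_A2_11_def by blast
  then have "m c = 1" "n = 1" using center_in_V star by (auto simp: is_star_def)
  then show False using center_mult by simp
qed

lemma center_not_truncated: "\<not> truncated_at ord m s c"
  using center_mult length_ord_center by (auto simp: truncated_at_def)

lemma hedge_center: "hedge ord (c, i) = ord c ! i"
  by (simp add: hedge_def)

lemma hsucc_center: "hsucc ord (c, i) = (c, Suc i mod n)"
  by (simp add: hsucc_def length_ord_center)

lemma qverts_star: "qverts Q = E"
  and qsrc_star: "qsrc Q (c, i) = ord c ! i"
  and qtgt_star: "qtgt Q (c, i) = ord c ! (Suc i mod n)"
  by (simp_all add: bg_quiver_not_A2_11[OF not_A2_11] hedge_center hsucc_center)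

text \<open>At a leaf the unique edge is truncated, so it carries no arrow.\<close>
lemma qarrs_star: "qarrs Q = Pair c ` {..<n}"
proof (intro equalityI subsetI)
  fix h assume h: "h \<in> qarrs Q"
  obtain \<alpha> i where hh: "h = (\<alpha>, i)" by (cases h)
  have he: "\<alpha> \<in> V" "i < length (ord \<alpha>)" "\<not> truncated_at ord m (hedge ord h) \<alpha>"
    using h hh bg_quiver_not_A2_11[OF not_A2_11] by (auto simp: halfedges_def)
  have "\<alpha> = c"
  proof (rule ccontr)
    assume "\<alpha> \<noteq> c"
    then obtain s where "ord \<alpha> = [s]" using leaf_ord he(1) by blast
    then show False using he leaf_mult \<open>\<alpha> \<noteq> c\<close> hh by (simp add: truncated_at_def hedge_def)
  qed
  then show "h \<in> Pair c ` {..<n}" using hh he(2) length_ord_center by simp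
next
  fix h assume "h \<in> Pair c ` {..<n}"
  then show "h \<in> qarrs Q"
    using bg_quiver_not_A2_11[OF not_A2_11] center_in_V length_ord_center center_not_truncated
    by (auto simp: halfedges_def)
qed

definition star_path :: "(nat, nat) qpath \<Rightarrow> ('e, 'v \<times> nat) qpath" where
  "star_path p = (case p of Triv i \<Rightarrow> Triv (ord c ! i) | Arrs ys \<Rightarrow> Arrs (map (Pair c) ys))"

lemma star_path_simps [simp]:
  "star_path (Triv i) = Triv (ord c ! i)" "star_path (Arrs ys) = Arrs (map (Pair c) ys)"
  by (simp_all add: star_path_def)

lemma valid_star_path_Arrs_iff:
  "valid_path Q (Arrs (map (Pair c) ys)) \<longleftrightarrow> valid_path (cycle_quiver n) (Arrs ys)"
proof (cases "set ys \<subseteq> {..<n}")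
  case True
  have "qtgt Q (c, ys ! k) = qsrc Q (c, ys ! Suc k) \<longleftrightarrow> Suc (ys ! k) mod n = ys ! Suc k"
    if "Suc k < length ys" for k
  proof -
    have "ys ! Suc k < n" using True that nth_mem by blast
    then show ?thesis using ord_center_inject n_pos by (simp add: qsrc_star qtgt_star)
  qed
  then show ?thesis using True by (auto simp: cycle_quiver_def qarrs_star)
next
  case False
  then show ?thesis by (auto simp: cycle_quiver_def qarrs_star)
qed

lemma star_path_ends:
  assumes "valid_path (cycle_quiver n) p"
  shows "pstart Q (star_path p) = ord c ! pstart (cycle_quiver n) p"
    "pend Q (star_path p) = ord c ! pend (cycle_quiver n) p"
  using assms by (cases p; simp add: hd_map last_map qsrc_star qtgt_star cycle_quiver_def)+

lemma star_path_inj_on: "inj_on star_path {p. valid_path (cycle_quiver n) p}"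
proof (rule inj_onI)
  fix p1 p2 assume p: "p1 \<in> {p. valid_path (cycle_quiver n) p}" "p2 \<in> {p. valid_path (cycle_quiver n) p}"
    and eq: "star_path p1 = star_path p2"
  show "p1 = p2"
  proof (cases p1; cases p2)
    fix i j assume "p1 = Triv i" "p2 = Triv j"
    then show ?thesis using p eq ord_center_inject by (simp add: cycle_quiver_def)
  next
    fix xs ys assume "p1 = Arrs xs" "p2 = Arrs ys"
    then show ?thesis using eq map_injective[of "Pair c"] by (simp add: inj_def)
  qed (use eq in simp_all)
qed

lemma star_path_image: "star_path ` {p. valid_path (cycle_quiver n) p} = {q. valid_path Q q}"
proof (intro equalityI subsetI)
  fix q assume "q \<in> star_path ` {p. valid_path (cycle_quiver n) p}"
  then obtain p where p: "valid_path (cycle_quiver n) p" "q = star_path p" by blast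
  show "q \<in> {q. valid_path Q q}"
  proof (cases p)
    case (Triv i)
    then have "i < n" using p(1) by (simp add: cycle_quiver_def)
    then have "ord c ! i \<in> E" using set_ord_center length_ord_center nth_mem by blast
    then show ?thesis using p(2) Triv by (simp add: qverts_star)
  next
    case (Arrs ys)
    then have "valid_path Q (Arrs (map (Pair c) ys))" using p(1) valid_star_path_Arrs_iff by blast
    then show ?thesis using p(2) Arrs by simp
  qed
next
  fix q assume q: "q \<in> {q. valid_path Q q}"
  show "q \<in> star_path ` {p. valid_path (cycle_quiver n) p}"
  proof (cases q)
    case (Triv s)
    then obtain i where "i < n" "s = ord c ! i"
      using q set_ord_center length_ord_center by (auto simp: qverts_star in_set_conv_nth)
    then show ?thesis using Triv by (intro image_eqI[of _ _ "Triv i"]) (simp_all add: cycle_quiver_def)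
  next
    case (Arrs xs)
    then have "set xs \<subseteq> Pair c ` {..<n}" using q qarrs_star by auto
    then have xs: "xs = map (Pair c) (map snd xs)" by (induction xs) auto
    moreover have "valid_path Q (Arrs xs)" using Arrs q by simp
    ultimately have "valid_path (cycle_quiver n) (Arrs (map snd xs))"
      using valid_star_path_Arrs_iff[of "map snd xs"] by simp
    then show ?thesis using Arrs xs by (intro image_eqI[of _ _ "Arrs (map snd xs)"]) auto
  qed
qed

lemma star_path_pcat:
  assumes p: "valid_path (cycle_quiver n) p1" "valid_path (cycle_quiver n) p2"
  shows "pcat Q (star_path p1) (star_path p2) = map_option star_path (pcat (cycle_quiver n) p1 p2)"
proof -
  have "pend Q (star_path p1) = pstart Q (star_path p2)
      \<longleftrightarrow> pend (cycle_quiver n) p1 = pstart (cycle_quiver n) p2"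
    using star_path_ends[OF p(1)] star_path_ends[OF p(2)] ord_center_inject
      valid_path_cycle_quiver_ends[OF p(1)] valid_path_cycle_quiver_ends[OF p(2)] by simp
  then show ?thesis unfolding pcat_def by (cases p1; cases p2) auto
qed

lemma star_path_iso: "path_iso Q (cycle_quiver n) star_path"
proof -
  have "plen (star_path p) = plen p" for p by (cases p) simp_all
  then show ?thesis
    unfolding path_iso_def bij_betw_def using star_path_inj_on star_path_image star_path_pcat by blast
qed

lemma bcycle_center: "bcycle ord (c, i) = map (\<lambda>k. (c, (i + k) mod n)) [0..<n]"
  by (simp add: bcycle_def length_ord_center)

text \<open>The right-hand side is the type two relation of the edge \<open>s = ord c ! i\<close>: the cycle
  \<open>C\<^sub>s\<^sub>,\<^sub>c\<close> taken \<open>m c\<close> times, followed by its first arrow.\<close>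
lemma star_path_cycle_path:
  assumes i: "i < n"
  shows "star_path (cycle_path n i (m c * n + 1)) = Arrs (bcycle_pow ord m (c, i) @ [(c, i)])"
proof -
  have len: "length (bcycle_pow ord m (c, i)) = m c * n"
    by (simp add: bcycle_pow_def length_concat sum_list_replicate bcycle_center)
  have "map (Pair c) (map (\<lambda>k. (i + k) mod n) [0..<m c * n + 1]) = bcycle_pow ord m (c, i) @ [(c, i)]"
  proof (rule nth_equalityI)
    fix k assume "k < length (map (Pair c) (map (\<lambda>k. (i + k) mod n) [0..<m c * n + 1]))"
    then consider "k < m c * n" | "k = m c * n" by fastforce
    then show "map (Pair c) (map (\<lambda>k. (i + k) mod n) [0..<m c * n + 1]) ! k
        = (bcycle_pow ord m (c, i) @ [(c, i)]) ! k"
    proof cases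
      case 1
      then have "bcycle_pow ord m (c, i) ! k = (c, (i + k mod n) mod n)"
        using n_pos by (simp add: bcycle_pow_def nth_concat_replicate bcycle_center mult.commute)
      then show ?thesis using 1 len by (simp add: nth_append mod_add_right_eq del: upt_Suc)
    next
      case 2
      then show ?thesis using i len by (simp add: nth_append del: upt_Suc)
    qed
  qed (simp add: len)
  then show ?thesis by (simp add: cycle_path_def)
qed

lemma bg_rel_one_star: "bg_rel_one V E ord m q = {}"
proof -
  have "truncated_edge V ord m s" if "s \<in> E" for s
    using leaf_of_edge[OF that] leaf_mult by (force simp: truncated_edge_def truncated_at_def)
  then show ?thesis by (auto simp: bg_rel_one_def)
qed

lemma bg_rel_three_star: "bg_rel_three V E ord m = {}"
proof -
  have False if a: "a \<in> qarrs Q" "b \<in> qarrs Q" "qtgt Q a = qsrc Q b"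
    and not_sub: "\<not> (\<exists>h \<in> qarrs Q. \<exists>u w. bcycle ord h = u @ [a, b] @ w)"
    and not_loop: "\<not> (a = b \<and> length (ord (fst a)) = 1)" for a b
  proof -
    obtain i j where ij: "a = (c, i)" "b = (c, j)" "i < n" "j < n" using a(1,2) qarrs_star by auto
    then have j: "j = Suc i mod n" using a(3) ord_center_inject n_pos by (simp add: qsrc_star qtgt_star)
    show False
    proof (cases "n = 1")
      case True
      then show ?thesis using not_loop ij j length_ord_center by simp
    next
      case False
      then have "[0..<n] = 0 # 1 # [2..<n]" using n_pos by (simp add: upt_conv_Cons numeral_2_eq_2)
      then have "bcycle ord (c, i) = [] @ [a, b] @ map (\<lambda>k. (c, (i + k) mod n)) [2..<n]"
        using ij j by (simp add: bcycle_center mod_Suc_eq)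
      then show False using not_sub a(1) ij(1) by blast
    qed
  qed
  then show ?thesis unfolding bg_rel_three_def Let_def by blast
qed

lemma bg_rel_two_star:
  "bg_rel_two V E ord m = pbasis ` star_path ` (\<lambda>i. cycle_path n i (m c * n + 1)) ` {..<n}"
proof (intro equalityI subsetI)
  fix r assume "r \<in> bg_rel_two V E ord m"
  then obtain s h1 h2 where h: "r = pbasis (Arrs (bcycle_pow ord m h2 @ [h2]))" "s \<in> E"
    "h1 \<in> halfedges V ord" "h2 \<in> halfedges V ord" "h1 \<noteq> h2" "hedge ord h1 = s" "hedge ord h2 = s"
    "truncated_at ord m s (fst h1)" unfolding bg_rel_two_def by blast
  obtain \<alpha> i where h2: "h2 = (\<alpha>, i)" by (cases h2)
  obtain \<beta> j where h1: "h1 = (\<beta>, j)" by (cases h1)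
  have hv: "\<alpha> \<in> V" "i < length (ord \<alpha>)" "\<beta> \<in> V" using h(3,4) h1 h2 by (auto simp: halfedges_def)
  have ob: "ord \<beta> = [s]" "j = 0" using h(3,8) h1 by (auto simp: truncated_at_def halfedges_def)
  have "\<alpha> = c"
  proof (rule ccontr)
    assume ac: "\<alpha> \<noteq> c"
    then obtain t where "ord \<alpha> = [t]" using leaf_ord hv(1) by blast
    then have "ord \<alpha> = [s]" "i = 0" using hv(2) h(7) h2 by (auto simp: hedge_def)
    moreover have "\<beta> \<noteq> c" using h(8) h1 center_not_truncated by auto
    ultimately show False
      using no_three_ends[OF bg h(2) hv(1) hv(3) center_in_V] ob h(5) h1 h2 ac set_ord_center h(2) by auto
  qed
  then have "i < n" using hv(2) length_ord_center by simp
  then have "r = pbasis (star_path (cycle_path n i (m c * n + 1)))"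
    using h(1) h2 \<open>\<alpha> = c\<close> star_path_cycle_path by simp
  then show "r \<in> pbasis ` star_path ` (\<lambda>i. cycle_path n i (m c * n + 1)) ` {..<n}"
    using \<open>i < n\<close> by blast
next
  fix r assume "r \<in> pbasis ` star_path ` (\<lambda>i. cycle_path n i (m c * n + 1)) ` {..<n}"
  then obtain i where i: "i < n" "r = pbasis (Arrs (bcycle_pow ord m (c, i) @ [(c, i)]))"
    using star_path_cycle_path by auto
  let ?s = "ord c ! i"
  have sE: "?s \<in> E" using set_ord_center length_ord_center i(1) nth_mem by blast
  obtain l where l: "l \<in> V - {c}" "ord l = [?s]" using leaf_of_edge[OF sE] by blast
  have "(l, 0) \<in> halfedges V ord" "(c, i) \<in> halfedges V ord" "(l, 0) \<noteq> (c, i)"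
    "hedge ord (l, 0) = ?s" "hedge ord (c, i) = ?s" "truncated_at ord m ?s (fst (l, 0))"
    using l i(1) length_ord_center center_in_V leaf_mult
    by (auto simp: halfedges_def hedge_def truncated_at_def)
  then show "r \<in> bg_rel_two V E ord m" unfolding bg_rel_two_def i(2) using sE by blast
qed

lemma bg_relations_star:
  "bg_relations V E ord m q = pbasis ` {p. valid_path Q p \<and> plen p = m c * n + 1}"
proof -
  have "bg_relations V E ord m q = pbasis ` star_path ` {p. valid_path (cycle_quiver n) p \<and> plen p = m c * n + 1}"
    using not_A2_11 n_pos
    by (simp add: bg_relations_def bg_rel_one_star bg_rel_three_star bg_rel_two_star
        paths_length_cycle_quiver)
  then show ?thesis using path_iso_image_paths_length[OF star_path_iso] by simp
qed

lemma d_homogeneous_bg_ideal_star_iff: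
  "d_homogeneous Q (bg_ideal V E ord m q) d \<longleftrightarrow> d = m c * n + 1"
proof -
  let ?D = "m c * n + 1"
  have hom: "d_homogeneous Q (bg_ideal V E ord m q) ?D"
    unfolding bg_ideal_def bg_relations_star by (rule d_homogeneous_gen_ideal_pbasis) simp_all
  let ?p = "star_path (cycle_path n 0 ?D)"
  have cp: "valid_path (cycle_quiver n) (cycle_path n 0 ?D)" "plen (cycle_path n 0 ?D) = ?D"
    by (rule valid_cycle_path[OF n_pos]) (simp_all add: cycle_path_def)
  then have "valid_path Q ?p" "plen ?p = ?D"
    using path_iso_valid[OF star_path_iso] path_iso_plen[OF star_path_iso] by simp_all
  then have "pbasis ?p \<in> bg_ideal V E ord m q"
    unfolding bg_ideal_def bg_relations_star by (blast intro: gen_ideal.gen)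
  then have "d_homogeneous Q (bg_ideal V E ord m q) d \<Longrightarrow> d = ?D"
    using hom d_homogeneous_unique pbasis_self[of ?p] by (metis one_neq_zero)
  then show ?thesis using hom by blast
qed

lemma quot_alg_iso_bg_ideal_star:
  "quot_alg_iso Q (bg_ideal V E ord m q)
     (cycle_quiver n) (paths_length_ideal n (m c * n + 1) :: ((nat, nat) qpath \<Rightarrow> 'k::field) set)"
proof -
  have "{pbasis p | p. valid_path (cycle_quiver n) p \<and> plen p = m c * n + 1}
      = (pbasis ` {p. valid_path (cycle_quiver n) p \<and> plen p = m c * n + 1} :: (_ \<Rightarrow> 'k) set)"
    by blast
  then show ?thesis
    unfolding bg_ideal_def bg_relations_star paths_length_ideal_def
    using quot_alg_iso_paths_length[OF star_path_iso] by simp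
qed

end

lemma brauer_star_if_d_homogeneous:
  fixes q :: "'e \<Rightarrow> 'v \<Rightarrow> 'k::field"
  assumes bg: "brauer_graph V E ord m"
    and dh: "d_homogeneous (bg_quiver V E ord m) (bg_ideal V E ord m q) d" and d: "3 \<le> d"
  shows "\<exists>c. brauer_star V E ord m c (card E)"
proof -
  note no_short = d_homogeneous_bg_ideal_no_short_relations[OF dh d]
  have "truncated_edge V ord m s" if "s \<in> E" for s
    using truncated_edge_if_no_rel_three[OF bg no_short that] .
  then obtain c where c: "is_star V E ord c (card E)" "\<forall>\<alpha>\<in>V - {c}. m \<alpha> = 1"
    using is_star_if_all_truncated[OF bg no_short(1)] by blast
  have "c \<in> V" using c(1) by (simp add: is_star_def)
  then have mc: "1 \<le> m c" using brauer_graphD(7)[OF bg] by (simp add: Suc_le_eq)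
  have nE: "1 \<le> card E" using brauer_graphD(2,3)[OF bg] by (simp add: Suc_le_eq card_gt_0_iff)
  have "2 \<le> m c * card E"
  proof (cases "m c = 1")
    case True
    then have "card E \<noteq> 1" using is_A2_11_if_star_1[OF bg _ _ c(2)] c(1) no_short(1) by force
    then show ?thesis using True nE by simp
  next
    case False
    then show ?thesis using mc nE mult_le_mono[of 2 "m c" 1 "card E"] by simp
  qed
  then show ?thesis using bg c by (auto simp: brauer_star_def)
qed

lemma star_conditions_iff:
  assumes bg: "brauer_graph V E ord m" and d: "3 \<le> d"
  shows "(1 \<le> n \<and> is_star V E ord c n \<and> n dvd (d - 1) \<and> m c = (d - 1) div n \<and>
          (\<forall>\<alpha> \<in> V - {c}. m \<alpha> = 1))
    \<longleftrightarrow> brauer_star V E ord m c n \<and> d = m c * n + 1"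
proof
  assume h: "1 \<le> n \<and> is_star V E ord c n \<and> n dvd (d - 1) \<and> m c = (d - 1) div n \<and>
    (\<forall>\<alpha> \<in> V - {c}. m \<alpha> = 1)"
  then have "m c * n = d - 1" by (metis dvd_div_mult_self)
  then show "brauer_star V E ord m c n \<and> d = m c * n + 1"
    using h bg d by (simp add: brauer_star_def)
next
  assume h: "brauer_star V E ord m c n \<and> d = m c * n + 1"
  then interpret brauer_star V E ord m c n by simp
  show "1 \<le> n \<and> is_star V E ord c n \<and> n dvd (d - 1) \<and> m c = (d - 1) div n \<and>
    (\<forall>\<alpha> \<in> V - {c}. m \<alpha> = 1)"
    using n_pos star leaf_mult h by simp
qed

theorem proposition2p3:
  fixes V :: "'v set" and E :: "'e set" and ord :: "'v \<Rightarrow> 'e list"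
    and m :: "'v \<Rightarrow> nat" and q :: "'e \<Rightarrow> 'v \<Rightarrow> 'k::field" and d :: nat
  assumes "quantized_brauer_graph V E ord m q"
    and "d \<ge> 3"
  shows "(d_homogeneous (bg_quiver V E ord m) (bg_ideal V E ord m q) d \<longleftrightarrow>
           (\<exists>c n. n \<ge> 1 \<and> is_star V E ord c n \<and> n dvd (d - 1) \<and>
                  m c = (d - 1) div n \<and> (\<forall>\<alpha> \<in> V - {c}. m \<alpha> = 1))) \<and>
         (\<forall>c n. n \<ge> 1 \<and> is_star V E ord c n \<and> n dvd (d - 1) \<and>
                m c = (d - 1) div n \<and> (\<forall>\<alpha> \<in> V - {c}. m \<alpha> = 1) \<longrightarrow>
                quot_alg_iso (bg_quiver V E ord m) (bg_ideal V E ord m q)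
                  (cycle_quiver n) (paths_length_ideal n d :: ((nat, nat) qpath \<Rightarrow> 'k) set))"
proof -
  have bg: "brauer_graph V E ord m"
    using assms(1) by (simp add: quantized_brauer_graph_def)
  note star_conditions = star_conditions_iff[OF bg assms(2)]
  have "d_homogeneous (bg_quiver V E ord m) (bg_ideal V E ord m q) d \<longleftrightarrow>
      (\<exists>c n. brauer_star V E ord m c n \<and> d = m c * n + 1)"
    using brauer_star_if_d_homogeneous[OF bg _ assms(2)] brauer_star.d_homogeneous_bg_ideal_star_iff
    by metis
  moreover have "quot_alg_iso (bg_quiver V E ord m) (bg_ideal V E ord m q)
      (cycle_quiver n) (paths_length_ideal n d :: ((nat, nat) qpath \<Rightarrow> 'k) set)"
    if "brauer_star V E ord m c n \<and> d = m c * n + 1" for c n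
    using that brauer_star.quot_alg_iso_bg_ideal_star[of V E ord m c n q] by simp
  ultimately show ?thesis unfolding star_conditions by blast
qed

end
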